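(* Let $(P,Q):[\tau_0,\infty)\times S^1\to\mathbb{R}^2$ be a smooth solution of \[ P_{\tau\tau}-e^{-2\tau}P_{\theta\theta}-e^{2P}(Q_\tau^2-e^{-2\tau}Q_\theta^2)=0,\qquad Q_{\tau\tau}-e^{-2\tau}Q_{\theta\theta}+2(P_\tau Q_\tau-e^{-2\tau}P_\theta Q_\theta)=0, \] with $\tau_0\ge2$, such that for some $\gamma>0$ and all $\theta\in S^1$, $1\le P(\tau_0,\theta)\le\tau_0-1$ and $\gamma\le P(\tau_0,\theta)/\tau_0\le1-\gamma$, and $F(\tau_0)\le(\gamma-\alpha)^2$ for some $0<\alpha<\gamma$. Then there is a constant $C$ such that for all $\tau\ge\tau_0$, \[ \big\|e^{2P}[Q_\tau^2(\tau,\cdot)+e^{-2\tau}Q_\theta^2(\tau,\cdot)]\big\|_{C^0(S^1,\mathbb{R})}\le Ce^{-\alpha\tau}. \]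
   Context: $S^1=\mathbb{R}/2\pi\mathbb{Z}$; $\|\cdot\|_{C^0}$ is the sup norm. The function $F$ is \[ F(\tau)=\tfrac12\sup_{\theta\in S^1}\Big[(P_\tau-\tfrac1\tau P+e^{-\tau}P_\theta)^2+e^{2P}(Q_\tau+e^{-\tau}Q_\theta)^2\Big] +\tfrac12\sup_{\theta\in S^1}\Big[(P_\tau-\tfrac1\tau P-e^{-\tau}P_\theta)^2+e^{2P}(Q_\tau-e^{-\tau}Q_\theta)^2\Big]. \] *)

theory Defs
  imports "HOL-Analysis.Analysis"
begin

text \<open>Smoothness (C-infinity) of a real function of two real variables on a set S,
  with derivatives taken within S (so one-sided derivatives at boundary points):
  there is a family D of functions containing f, each member of which is
  (Frechet) differentiable within S at every point of S with both partial
  derivatives again in D.\<close>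
definition smooth_on2 :: "(real \<times> real) set \<Rightarrow> (real \<times> real \<Rightarrow> real) \<Rightarrow> bool" where
  "smooth_on2 S f \<longleftrightarrow>
     (\<exists>D. f \<in> D \<and>
        (\<forall>g\<in>D. \<exists>g1\<in>D. \<exists>g2\<in>D. \<forall>p\<in>S.
            (g has_derivative (\<lambda>(h, k). g1 p * h + g2 p * k)) (at p within S)))"

definition dtau :: "real \<Rightarrow> (real \<Rightarrow> real \<Rightarrow> real) \<Rightarrow> real \<Rightarrow> real \<Rightarrow> real" where
  "dtau t0 u t x = vector_derivative (\<lambda>s. u s x) (at t within {t0..})"

definition dth :: "(real \<Rightarrow> real \<Rightarrow> real) \<Rightarrow> real \<Rightarrow> real \<Rightarrow> real" where
  "dth u t x = vector_derivative (\<lambda>y. u t y) (at x)"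

text \<open>The functional F(tau) from the paper; theta ranges over S^1, represented by
  2*pi-periodic functions on the reals.\<close>
definition Ffun :: "real \<Rightarrow> (real \<Rightarrow> real \<Rightarrow> real) \<Rightarrow> (real \<Rightarrow> real \<Rightarrow> real) \<Rightarrow> real \<Rightarrow> real" where
  "Ffun t0 P Q t =
     1/2 * (SUP x\<in>UNIV. (dtau t0 P t x - P t x / t + exp (-t) * dth P t x)\<^sup>2
                     + exp (2 * P t x) * (dtau t0 Q t x + exp (-t) * dth Q t x)\<^sup>2)
   + 1/2 * (SUP x\<in>UNIV. (dtau t0 P t x - P t x / t - exp (-t) * dth P t x)\<^sup>2
                     + exp (2 * P t x) * (dtau t0 Q t x - exp (-t) * dth Q t x)\<^sup>2)"

end

theory Submission
  imports Defs
begin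

text \<open>Write \<open>\<partial>\<^sub>\<pm> = \<partial>\<^sub>\<tau> \<pm> e\<^sup>-\<^sup>\<tau> \<partial>\<^sub>\<theta>\<close>. Up to first order terms the wave operator
  factors as \<open>\<partial>\<^sub>\<mp> \<partial>\<^sub>\<pm>\<close>, so along the curves \<open>\<theta> = x \<pm> e\<^sup>-\<^sup>\<tau>\<close> the quantities
  \<open>C\<^sub>\<pm> = \<partial>\<^sub>\<pm>P - P/\<tau>\<close> and \<open>B\<^sub>\<pm> = e\<^sup>P \<partial>\<^sub>\<pm>Q\<close> obey ODEs coupled only to \<open>C\<^sub>\<mp>\<close>,
  \<open>B\<^sub>\<mp>\<close> and \<open>P/\<tau>\<close>. Comparing \<open>E\<^sub>\<pm> = C\<^sub>\<pm>\<^sup>2 + B\<^sub>\<pm>\<^sup>2\<close> with an explicit strict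
  supersolution of the linearised system, via a first touching time on the compact circle, gives
  \<open>E\<^sub>\<pm> = O(\<tau>\<^sup>-\<^sup>2)\<close>. Integrating the resulting bound on \<open>P\<^sub>\<tau> - P/\<tau>\<close> keeps \<open>P/\<tau>\<close> within
  \<open>K < \<gamma> - \<alpha>/2\<close> of its initial range \<open>[\<gamma>, 1 - \<gamma>]\<close>. Hence eventually
  \<open>|1 - 2 \<partial>\<^sub>\<pm>P| \<le> 1 - \<alpha> - 2\<mu>\<close> for some \<open>\<mu> > 0\<close>, and a second comparison, now with \<open>C e\<^sup>-\<^sup>\<alpha>\<^sup>\<tau>\<close>, bounds
  \<open>B\<^sub>\<pm>\<^sup>2\<close>, whose mean is \<open>e\<^sup>2\<^sup>P (Q\<^sub>\<tau>\<^sup>2 + e\<^sup>-\<^sup>2\<^sup>\<tau> Q\<^sub>\<theta>\<^sup>2)\<close>.\<close>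

section \<open>Elementary calculus\<close>

lemma has_real_derivative_along_graph:
  fixes f :: "real \<times> real \<Rightarrow> real" and c :: "real \<Rightarrow> real"
  assumes f: "(f has_derivative (\<lambda>(h, k). a * h + b * k)) (at (t, c t) within S)"
    and c: "(c has_real_derivative c') (at t within T)"
    and T: "(\<lambda>s. (s, c s)) ` T \<subseteq> S"
  shows "((\<lambda>s. f (s, c s)) has_real_derivative a + c' * b) (at t within T)"
proof -
  have graph: "((\<lambda>s. (s, c s)) has_derivative (\<lambda>h. (h, c' * h))) (at t within T)"
    using c unfolding has_field_derivative_def by (intro has_derivative_Pair has_derivative_ident)
  have "(f has_derivative (\<lambda>(h, k). a * h + b * k)) (at (t, c t) within (\<lambda>s. (s, c s)) ` T)"
    using f T by (rule has_derivative_subset)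
  from has_derivative_in_compose[OF graph this] show ?thesis
    unfolding has_field_derivative_def
    by (rule has_derivative_eq_rhs) (simp add: fun_eq_iff algebra_simps)
qed

lemma has_real_derivative_fst_partial:
  fixes f :: "real \<times> real \<Rightarrow> real"
  assumes "(f has_derivative (\<lambda>(h, k). a * h + b * k)) (at (t, x) within S)"
    and "(\<lambda>s. (s, x)) ` T \<subseteq> S"
  shows "((\<lambda>s. f (s, x)) has_real_derivative a) (at t within T)"
  using has_real_derivative_along_graph[where c = "\<lambda>_. x" and c' = 0, OF _ _ assms(2)] assms(1)
  by simp

lemma has_real_derivative_snd_partial:
  fixes f :: "real \<times> real \<Rightarrow> real"
  assumes f: "(f has_derivative (\<lambda>(h, k). a * h + b * k)) (at (t, y) within S)"
    and T: "(\<lambda>v. (t, v)) ` T \<subseteq> S"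
  shows "((\<lambda>v. f (t, v)) has_real_derivative b) (at y within T)"
proof -
  have line: "((\<lambda>v. (t, v)) has_derivative (\<lambda>h. (0, h))) (at y within T)"
    by (intro has_derivative_Pair has_derivative_const has_derivative_ident)
  have "(f has_derivative (\<lambda>(h, k). a * h + b * k)) (at (t, y) within (\<lambda>v. (t, v)) ` T)"
    using f T by (rule has_derivative_subset)
  from has_derivative_in_compose[OF line this] show ?thesis
    unfolding has_field_derivative_def
    by (rule has_derivative_eq_rhs) (simp add: fun_eq_iff)
qed

lemma quotient_drift_bound:
  fixes f f' :: "real \<Rightarrow> real"
  assumes "0 < a" "a \<le> s" and cont: "continuous_on {a..s} f"
    and f': "\<And>u. a < u \<Longrightarrow> u < s \<Longrightarrow> (f has_real_derivative f' u) (at u)"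
    and drift: "\<And>u. a < u \<Longrightarrow> u < s \<Longrightarrow> \<bar>f' u - f u / u\<bar> \<le> k / u"
  shows "\<bar>f s / s - f a / a\<bar> \<le> k / a - k / s"
proof -
  have D: "((\<lambda>v. f v / v + c * k / v) has_real_derivative ((f' u - f u / u) - c * k / u) / u) (at u)"
    if "a < u" "u < s" for u c
    using that \<open>0 < a\<close> by (auto intro!: derivative_eq_intros f' simp: field_simps power2_eq_square)
  have cont': "continuous_on {a..s} (\<lambda>v. f v / v + c * k / v)" for c
    using \<open>0 < a\<close> by (intro continuous_intros cont) auto
  have "f a / a - k / a \<le> f s / s - k / s"
  proof (rule DERIV_nonneg_imp_increasing_open[OF \<open>a \<le> s\<close> _ cont'[of "-1", simplified]])
    fix u assume u: "a < u" "u < s"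
    have "0 \<le> ((f' u - f u / u) - (-1) * k / u) / u"
      using drift[OF u] u \<open>0 < a\<close> by simp
    then show "\<exists>y. ((\<lambda>v. f v / v - k / v) has_real_derivative y) (at u) \<and> 0 \<le> y"
      using D[OF u, of "-1"] by auto
  qed
  moreover have "f s / s + k / s \<le> f a / a + k / a"
  proof (rule DERIV_nonpos_imp_decreasing_open[OF \<open>a \<le> s\<close> _ cont'[of 1, simplified]])
    fix u assume u: "a < u" "u < s"
    have "((f' u - f u / u) - 1 * k / u) / u \<le> 0"
      using drift[OF u] u \<open>0 < a\<close> by (simp add: divide_nonpos_pos)
    then show "\<exists>y. ((\<lambda>v. f v / v + k / v) has_real_derivative y) (at u) \<and> y \<le> 0"
      using D[OF u, of 1] by auto
  qed
  ultimately show ?thesis by (simp add: abs_le_iff)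
qed

lemma mult_le_mean_squares:
  fixes k c a b :: real
  assumes "\<bar>k\<bar> \<le> c"
  shows "k * a * b \<le> c * ((a\<^sup>2 + b\<^sup>2) / 2)"
proof -
  have "2 * (\<bar>a\<bar> * \<bar>b\<bar>) \<le> a\<^sup>2 + b\<^sup>2"
    using zero_le_power2[of "\<bar>a\<bar> - \<bar>b\<bar>"] by (simp add: power2_eq_square algebra_simps)
  have "k * a * b \<le> \<bar>k\<bar> * (\<bar>a\<bar> * \<bar>b\<bar>)"
    by (metis abs_ge_self abs_mult mult.assoc)
  also have "\<dots> \<le> c * ((a\<^sup>2 + b\<^sup>2) / 2)"
    using assms \<open>2 * (\<bar>a\<bar> * \<bar>b\<bar>) \<le> a\<^sup>2 + b\<^sup>2\<close> by (intro mult_mono) auto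
  finally show ?thesis .
qed

lemma second_difference_mean_value:
  fixes f f1 f12 :: "real \<times> real \<Rightarrow> real"
  assumes h: "0 < h"
    and d1: "\<And>s y. t \<le> s \<Longrightarrow> s \<le> t + h \<Longrightarrow> x \<le> y \<Longrightarrow> y \<le> x + h \<Longrightarrow>
      ((\<lambda>u. f (u, y)) has_real_derivative f1 (s, y)) (at s)"
    and d12: "\<And>s y. t \<le> s \<Longrightarrow> s \<le> t + h \<Longrightarrow> x \<le> y \<Longrightarrow> y \<le> x + h \<Longrightarrow>
      ((\<lambda>v. f1 (s, v)) has_real_derivative f12 (s, y)) (at y)"
  shows "\<exists>\<xi> \<eta>. t < \<xi> \<and> \<xi> < t + h \<and> x < \<eta> \<and> \<eta> < x + h \<and>
    f (t + h, x + h) - f (t + h, x) - f (t, x + h) + f (t, x) = h * (h * f12 (\<xi>, \<eta>))"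
proof -
  have "\<exists>\<xi>. t < \<xi> \<and> \<xi> < t + h \<and> (f (t + h, x + h) - f (t + h, x)) - (f (t, x + h) - f (t, x))
      = (t + h - t) * (f1 (\<xi>, x + h) - f1 (\<xi>, x))"
    by (rule MVT2[where f = "\<lambda>s. f (s, x + h) - f (s, x)"]) (use h in \<open>auto intro!: DERIV_diff d1\<close>)
  then obtain \<xi> where \<xi>: "t < \<xi>" "\<xi> < t + h"
    "(f (t + h, x + h) - f (t + h, x)) - (f (t, x + h) - f (t, x)) = h * (f1 (\<xi>, x + h) - f1 (\<xi>, x))"
    by auto
  have "\<exists>\<eta>. x < \<eta> \<and> \<eta> < x + h \<and> f1 (\<xi>, x + h) - f1 (\<xi>, x) = (x + h - x) * f12 (\<xi>, \<eta>)"
    by (rule MVT2) (use h \<xi> in \<open>auto intro!: d12\<close>)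
  then obtain \<eta> where \<eta>: "x < \<eta>" "\<eta> < x + h" "f1 (\<xi>, x + h) - f1 (\<xi>, x) = h * f12 (\<xi>, \<eta>)"
    by auto
  have "f (t + h, x + h) - f (t + h, x) - f (t, x + h) + f (t, x) = h * (h * f12 (\<xi>, \<eta>))"
    using \<xi>(3) \<eta>(3) by (simp add: algebra_simps)
  with \<xi>(1,2) \<eta>(1,2) show ?thesis by blast
qed

text \<open>Schwarz's theorem: the second difference of \<open>f\<close> over a small square is evaluated by
  the mean value theorem in either order.\<close>
lemma mixed_partials_eq:
  fixes f f1 f2 f12 f21 :: "real \<times> real \<Rightarrow> real"
  assumes U: "open U" "(t, x) \<in> U"
    and d1: "\<And>s y. (s, y) \<in> U \<Longrightarrow> ((\<lambda>u. f (u, y)) has_real_derivative f1 (s, y)) (at s)"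
    and d12: "\<And>s y. (s, y) \<in> U \<Longrightarrow> ((\<lambda>v. f1 (s, v)) has_real_derivative f12 (s, y)) (at y)"
    and d2: "\<And>s y. (s, y) \<in> U \<Longrightarrow> ((\<lambda>v. f (s, v)) has_real_derivative f2 (s, y)) (at y)"
    and d21: "\<And>s y. (s, y) \<in> U \<Longrightarrow> ((\<lambda>u. f2 (u, y)) has_real_derivative f21 (s, y)) (at s)"
    and c12: "continuous (at (t, x)) f12" and c21: "continuous (at (t, x)) f21"
  shows "f12 (t, x) = f21 (t, x)"
proof (rule ccontr)
  assume "f12 (t, x) \<noteq> f21 (t, x)"
  define \<epsilon> where "\<epsilon> = \<bar>f12 (t, x) - f21 (t, x)\<bar> / 2"
  have \<epsilon>: "\<epsilon> > 0" using \<open>f12 (t, x) \<noteq> f21 (t, x)\<close> by (simp add: \<epsilon>_def)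
  obtain d0 where d0: "d0 > 0" "ball (t, x) d0 \<subseteq> U" using U open_contains_ball by blast
  obtain \<delta>1 where \<delta>1: "\<delta>1 > 0" "\<And>z. dist z (t, x) < \<delta>1 \<Longrightarrow> dist (f12 z) (f12 (t, x)) < \<epsilon>"
    using c12 \<epsilon> unfolding continuous_at_eps_delta by blast
  obtain \<delta>2 where \<delta>2: "\<delta>2 > 0" "\<And>z. dist z (t, x) < \<delta>2 \<Longrightarrow> dist (f21 z) (f21 (t, x)) < \<epsilon>"
    using c21 \<epsilon> unfolding continuous_at_eps_delta by blast
  define h where "h = Min {d0, \<delta>1, \<delta>2} / 2"
  have h: "h > 0" "2 * h \<le> d0" "2 * h \<le> \<delta>1" "2 * h \<le> \<delta>2"
    using d0 \<delta>1 \<delta>2 by (auto simp: h_def)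
  have near: "dist (s, y) (t, x) < 2 * h" if "t \<le> s" "s \<le> t + h" "x \<le> y" "y \<le> x + h" for s y
  proof -
    have "dist (s, y) (t, x) = sqrt ((s - t)\<^sup>2 + (y - x)\<^sup>2)"
      by (simp add: dist_Pair_Pair dist_real_def)
    also have "\<dots> \<le> sqrt (h\<^sup>2 + h\<^sup>2)"
      using that by (intro real_sqrt_le_mono add_mono power_mono) auto
    also have "\<dots> < sqrt ((2 * h)\<^sup>2)"
      using h by (intro real_sqrt_less_mono) (simp add: power2_eq_square)
    also have "\<dots> = 2 * h"
      using h by (intro real_sqrt_unique) auto
    finally show ?thesis .
  qed
  have inU: "(s, y) \<in> U" if "t \<le> s" "s \<le> t + h" "x \<le> y" "y \<le> x + h" for s y
    using near[OF that] h d0 by (auto simp: dist_commute subset_iff)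
  obtain \<xi> \<eta> where \<xi>\<eta>: "t < \<xi>" "\<xi> < t + h" "x < \<eta>" "\<eta> < x + h"
    "f (t + h, x + h) - f (t + h, x) - f (t, x + h) + f (t, x) = h * (h * f12 (\<xi>, \<eta>))"
    using second_difference_mean_value[of h t x f f1 f12] h(1) d1 d12 inU by blast
  obtain \<eta>' \<xi>' where \<eta>'\<xi>': "x < \<eta>'" "\<eta>' < x + h" "t < \<xi>'" "\<xi>' < t + h"
    "f (t + h, x + h) - f (t, x + h) - f (t + h, x) + f (t, x) = h * (h * f21 (\<xi>', \<eta>'))"
    using second_difference_mean_value[of h x t "\<lambda>(y, s). f (s, y)" "\<lambda>(y, s). f2 (s, y)" "\<lambda>(y, s). f21 (s, y)"]
      h(1) d2 d21 inU by auto
  have "f12 (\<xi>, \<eta>) = f21 (\<xi>', \<eta>')"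
    using \<xi>\<eta>(5) \<eta>'\<xi>'(5) h(1) by (simp add: algebra_simps)
  moreover have "dist (f12 (\<xi>, \<eta>)) (f12 (t, x)) < \<epsilon>"
    using \<delta>1(2) near[of \<xi> \<eta>] \<xi>\<eta> h by auto
  moreover have "dist (f21 (\<xi>', \<eta>')) (f21 (t, x)) < \<epsilon>"
    using \<delta>2(2) near[of \<xi>' \<eta>'] \<eta>'\<xi>' h by auto
  ultimately show False unfolding dist_real_def \<epsilon>_def by argo
qed

section \<open>Periodic functions and first touching times\<close>

lemma periodic_int_shift:
  fixes f :: "real \<Rightarrow> 'a"
  assumes "\<And>x. f (x + 2 * pi) = f x"
  shows "f (y + 2 * pi * of_int n) = f y"
proof (induction n rule: int_induct[where k = 0])
  case (step1 i)
  have "f (y + 2 * pi * of_int (i + 1)) = f ((y + 2 * pi * of_int i) + 2 * pi)"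
    by (simp add: algebra_simps)
  with assms step1 show ?case by simp
next
  case (step2 i)
  have "f (y + 2 * pi * of_int i) = f ((y + 2 * pi * of_int (i - 1)) + 2 * pi)"
    by (simp add: algebra_simps)
  with assms step2 show ?case by simp
qed simp

lemma periodic_representative:
  fixes f :: "real \<Rightarrow> 'a"
  assumes "\<And>x. f (x + 2 * pi) = f x"
  obtains y where "y \<in> {0..2 * pi}" "f x = f y"
proof
  define n where "n = \<lfloor>x / (2 * pi)\<rfloor>"
  have "of_int n \<le> x / (2 * pi)" "x / (2 * pi) < of_int n + 1"
    unfolding n_def by linarith+
  then show "x - 2 * pi * of_int n \<in> {0..2 * pi}"
    by (simp add: field_simps)
  show "f x = f (x - 2 * pi * of_int n)"
    using periodic_int_shift[of f "x - 2 * pi * of_int n" n, OF assms] by simp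
qed

lemma periodic_strip_bounded:
  fixes g :: "real \<times> real \<Rightarrow> real"
  assumes "continuous_on ({a..b} \<times> UNIV) g" "a \<le> b"
    and "\<And>t x. t \<in> {a..b} \<Longrightarrow> g (t, x + 2 * pi) = g (t, x)"
  obtains M where "\<And>t x. t \<in> {a..b} \<Longrightarrow> g (t, x) \<le> M"
proof -
  have "compact ({a..b} \<times> {0..2 * pi})" by (intro compact_Times compact_Icc)
  moreover have "{a..b} \<times> {0..2 * pi} \<noteq> {}" using assms(2) by auto
  moreover have "continuous_on ({a..b} \<times> {0..2 * pi}) g"
    by (rule continuous_on_subset[OF assms(1)]) auto
  ultimately obtain z where z: "\<And>y. y \<in> {a..b} \<times> {0..2 * pi} \<Longrightarrow> g y \<le> g z"
    using continuous_attains_sup[of "{a..b} \<times> {0..2 * pi}" g] by blast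
  have "g (t, x) \<le> g z" if t: "t \<in> {a..b}" for t x
  proof -
    obtain y where "y \<in> {0..2 * pi}" "g (t, x) = g (t, y)"
      using periodic_representative[of "\<lambda>x. g (t, x)"] assms(3)[OF t] by blast
    then show ?thesis using z[of "(t, y)"] t by auto
  qed
  then show ?thesis by (rule that)
qed

lemma first_nonneg_time:
  fixes g :: "real \<times> real \<Rightarrow> real"
  assumes cont: "continuous_on ({a..} \<times> UNIV) g"
    and per: "\<And>t x. a \<le> t \<Longrightarrow> g (t, x + 2 * pi) = g (t, x)"
    and t1: "a \<le> t1" "g (t1, x1) \<ge> 0"
  obtains T x where "a \<le> T" "T \<le> t1" "g (T, x) \<ge> 0" "\<And>s y. a \<le> s \<Longrightarrow> s < T \<Longrightarrow> g (s, y) < 0"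
proof -
  define R where "R = {a..t1} \<times> {0..2 * pi}"
  define K where "K = R \<inter> g -` {0..}"
  have inK: "(s, y) \<in> K \<longleftrightarrow> a \<le> s \<and> s \<le> t1 \<and> y \<in> {0..2 * pi} \<and> g (s, y) \<ge> 0" for s y
    by (auto simp: K_def R_def)
  have "closed K" unfolding K_def R_def
    by (rule continuous_closed_preimage)
      (auto intro: continuous_on_subset[OF cont] closed_Times)
  moreover have "compact R" unfolding R_def by (intro compact_Times compact_Icc)
  ultimately have "compact (K \<inter> R)" by (rule closed_Int_compact)
  moreover have "K \<inter> R = K" by (auto simp: K_def)
  ultimately have "compact K" by simp
  have rep: "\<exists>y'. (s, y') \<in> K" if s: "a \<le> s" "s \<le> t1" "g (s, y) \<ge> 0" for s y
  proof -
    obtain y' where "y' \<in> {0..2 * pi}" "g (s, y) = g (s, y')"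
      using periodic_representative[of "\<lambda>x. g (s, x)", OF per[OF s(1)]] by blast
    with s show ?thesis unfolding inK by auto
  qed
  have "K \<noteq> {}" using rep[OF t1(1) order_refl t1(2)] by blast
  then obtain z where z: "z \<in> K" "\<And>y. y \<in> K \<Longrightarrow> fst z \<le> fst y"
    using continuous_attains_inf[OF \<open>compact K\<close> _ continuous_on_fst[OF continuous_on_id]] by blast
  obtain T x where zTx: "z = (T, x)" by (cases z)
  show ?thesis
  proof (rule that)
    show "a \<le> T" "T \<le> t1" "g (T, x) \<ge> 0" using z(1) unfolding zTx inK by auto
    show "g (s, y) < 0" if s: "a \<le> s" "s < T" for s y
    proof (rule ccontr)
      assume "\<not> g (s, y) < 0"
      then obtain y' where "(s, y') \<in> K"
        using rep[of s y] s \<open>T \<le> t1\<close> by force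
      then show False using z(2) s(2) unfolding zTx by force
    qed
  qed
qed

lemma nonpos_at_right_endpoint:
  fixes f :: "real \<Rightarrow> real"
  assumes "continuous_on {a..T} f" "a < T" "\<And>s. a \<le> s \<Longrightarrow> s < T \<Longrightarrow> f s < 0"
  shows "f T \<le> 0"
proof (rule ccontr)
  assume "\<not> f T \<le> 0"
  then have pos: "f T > 0" by simp
  have "T \<in> {a..T}" using assms(2) by simp
  then obtain d where d: "d > 0" "\<And>s. s \<in> {a..T} \<Longrightarrow> dist s T < d \<Longrightarrow> dist (f s) (f T) < f T"
    using assms(1) pos unfolding continuous_on_iff by blast
  define s where "s = max a (T - d / 2)"
  have "s \<in> {a..T}" "dist s T < d" using d assms(2) by (auto simp: s_def dist_real_def)
  then have "dist (f s) (f T) < f T" by (rule d(2))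
  moreover have "f s < 0" using assms(3)[of s] d assms(2) by (auto simp: s_def)
  ultimately show False by (simp add: dist_real_def)
qed

lemma first_touching_time:
  fixes f :: "real \<Rightarrow> real \<times> real \<Rightarrow> real" and W :: "real \<Rightarrow> real \<Rightarrow> real"
  assumes cont: "\<And>e. e = 1 \<or> e = -1 \<Longrightarrow> continuous_on ({a..} \<times> UNIV) (f e)"
    and contW: "\<And>e. e = 1 \<or> e = -1 \<Longrightarrow> continuous_on {a..} (W e)"
    and per: "\<And>e t x. e = 1 \<or> e = -1 \<Longrightarrow> a \<le> t \<Longrightarrow> f e (t, x + 2 * pi) = f e (t, x)"
    and init: "\<And>e y. e = 1 \<or> e = -1 \<Longrightarrow> f e (a, y) < W e a"
    and viol: "a \<le> t" "e = 1 \<or> e = -1" "W e t \<le> f e (t, y)"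
  obtains T e0 x where "a < T" "T \<le> t" "e0 = 1 \<or> e0 = -1" "f e0 (T, x) = W e0 T"
    "\<And>s y e'. a \<le> s \<Longrightarrow> s < T \<Longrightarrow> e' = 1 \<or> e' = -1 \<Longrightarrow> f e' (s, y) < W e' s"
    "\<And>s y e'. a \<le> s \<Longrightarrow> s \<le> T \<Longrightarrow> e' = 1 \<or> e' = -1 \<Longrightarrow> f e' (s, y) \<le> W e' s"
proof -
  define g where "g z = max (f 1 z - W 1 (fst z)) (f (-1) z - W (-1) (fst z))" for z
  have "continuous_on ({a..} \<times> UNIV) (\<lambda>z. W e (fst z))" if "e = 1 \<or> e = -1" for e
    by (rule continuous_on_compose2[OF contW[OF that]]) (auto intro: continuous_intros)
  then have cont_g: "continuous_on ({a..} \<times> UNIV) g"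
    unfolding g_def by (intro continuous_intros cont) auto
  have per_g: "g (t, x + 2 * pi) = g (t, x)" if "a \<le> t" for t x
    using per[OF _ that] by (simp add: g_def)
  have "g (t, y) \<ge> 0" using viol by (auto simp: g_def)
  then obtain T x where T: "a \<le> T" "T \<le> t" "g (T, x) \<ge> 0"
    and below: "\<And>s y. a \<le> s \<Longrightarrow> s < T \<Longrightarrow> g (s, y) < 0"
    using first_nonneg_time[OF cont_g per_g viol(1)] by blast
  have "g (a, x) < 0" using init[of 1 x] init[of "-1" x] by (simp add: g_def)
  with T have aT: "a < T" by (cases "a = T") auto
  have strict: "f e' (s, y') < W e' s" if "a \<le> s" "s < T" "e' = 1 \<or> e' = -1" for s y' e'
    using below[OF that(1,2), of y'] that(3) by (auto simp: g_def)
  have le: "f e' (s, y') \<le> W e' s" if "a \<le> s" "s \<le> T" "e' = 1 \<or> e' = -1" for s y' e'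
  proof (cases "s < T")
    case False
    have "continuous_on {a..T} (\<lambda>u. f e' (u, y') - W e' u)"
      by (intro continuous_intros continuous_on_compose2[OF cont[OF that(3)]]
          continuous_on_subset[OF contW[OF that(3)]]) auto
    then have "f e' (T, y') - W e' T \<le> 0"
      by (rule nonpos_at_right_endpoint) (use aT strict[OF _ _ that(3)] in auto)
    with False that show ?thesis by simp
  qed (use strict[OF that(1) _ that(3)] in \<open>auto intro: less_imp_le\<close>)
  obtain e0 where e0: "e0 = 1 \<or> e0 = -1" "f e0 (T, x) \<ge> W e0 T"
    using T(3) by (auto simp: g_def max_def split: if_splits)
  show ?thesis
    by (rule that[OF aT T(2) e0(1) _ strict le])
      (use e0 le[OF T(1) order_refl e0(1), of x] in auto)
qed

lemma barrier_principle:
  fixes f :: "real \<Rightarrow> real \<times> real \<Rightarrow> real" and W :: "real \<Rightarrow> real \<Rightarrow> real"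
  assumes cont: "\<And>e. e = 1 \<or> e = -1 \<Longrightarrow> continuous_on ({a..} \<times> UNIV) (f e)"
    and contW: "\<And>e. e = 1 \<or> e = -1 \<Longrightarrow> continuous_on {a..} (W e)"
    and per: "\<And>e t x. e = 1 \<or> e = -1 \<Longrightarrow> a \<le> t \<Longrightarrow> f e (t, x + 2 * pi) = f e (t, x)"
    and init: "\<And>e y. e = 1 \<or> e = -1 \<Longrightarrow> f e (a, y) < W e a"
    and step: "\<And>T e x0. a < T \<Longrightarrow> e = 1 \<or> e = -1 \<Longrightarrow>
        (\<And>s y e'. a \<le> s \<Longrightarrow> s \<le> T \<Longrightarrow> e' = 1 \<or> e' = -1 \<Longrightarrow> f e' (s, y) \<le> W e' s) \<Longrightarrow>
        f e (T, x0 + e * exp (- T)) = W e T \<Longrightarrow>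
        \<exists>D<0. ((\<lambda>s. f e (s, x0 + e * exp (- s)) - W e s) has_real_derivative D) (at T)"
    and t: "a \<le> t" and e: "e = 1 \<or> e = -1"
  shows "f e (t, y) < W e t"
proof (rule ccontr)
  assume "\<not> f e (t, y) < W e t"
  then have viol: "W e t \<le> f e (t, y)" by simp
  obtain T e0 x where T: "a < T" "T \<le> t" "e0 = 1 \<or> e0 = -1" "f e0 (T, x) = W e0 T"
    and strict: "\<And>s y e'. a \<le> s \<Longrightarrow> s < T \<Longrightarrow> e' = 1 \<or> e' = -1 \<Longrightarrow> f e' (s, y) < W e' s"
    and le: "\<And>s y e'. a \<le> s \<Longrightarrow> s \<le> T \<Longrightarrow> e' = 1 \<or> e' = -1 \<Longrightarrow> f e' (s, y) \<le> W e' s"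
    using first_touching_time[where f = f and W = W, OF cont contW per init t e viol] by blast
  define x0 where "x0 = x - e0 * exp (- T)"
  define d where "d s = f e0 (s, x0 + e0 * exp (- s)) - W e0 s" for s
  have touch: "f e0 (T, x0 + e0 * exp (- T)) = W e0 T" using T(4) by (simp add: x0_def)
  then have "d T = 0" by (simp add: d_def)
  obtain D where "D < 0" "(d has_real_derivative D) (at T)"
    using step[OF T(1,3) le touch] unfolding d_def by blast
  then obtain \<delta> where \<delta>: "\<delta> > 0" "\<And>h. h > 0 \<Longrightarrow> h < \<delta> \<Longrightarrow> d T < d (T - h)"
    using DERIV_neg_dec_left by blast
  define h where "h = min (\<delta> / 2) ((T - a) / 2)"
  have "0 < h" using \<delta>(1) T(1) by (simp add: h_def)
  moreover have "h \<le> \<delta> / 2" "h \<le> (T - a) / 2"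
    unfolding h_def by (rule min.cobounded1, rule min.cobounded2)
  ultimately have h: "0 < h" "h < \<delta>" "a \<le> T - h" "T - h < T"
    using T(1) by auto
  have "0 < d (T - h)" using \<delta>(2)[OF h(1,2)] \<open>d T = 0\<close> by simp
  moreover have "d (T - h) < 0"
    unfolding d_def using strict[OF h(3,4) T(3)] by simp
  ultimately show False by simp
qed

section \<open>The Gowdy equations along characteristics\<close>

text \<open>A single \<open>u12\<close> serves as both mixed partials; for smooth \<open>u\<close> this is \<open>mixed_partials_eq\<close>.\<close>
locale periodic_C2_strip =
  fixes t0 :: real and u u1 u2 u11 u12 u22 :: "real \<times> real \<Rightarrow> real"
  assumes continuous_u: "continuous_on ({t0..} \<times> UNIV) u"
    and continuous_u1: "continuous_on ({t0..} \<times> UNIV) u1"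
    and continuous_u2: "continuous_on ({t0..} \<times> UNIV) u2"
    and has_derivative_u:
      "\<And>z. z \<in> {t0<..} \<times> UNIV \<Longrightarrow> (u has_derivative (\<lambda>(h, k). u1 z * h + u2 z * k)) (at z)"
    and has_derivative_u1:
      "\<And>z. z \<in> {t0<..} \<times> UNIV \<Longrightarrow> (u1 has_derivative (\<lambda>(h, k). u11 z * h + u12 z * k)) (at z)"
    and has_derivative_u2:
      "\<And>z. z \<in> {t0<..} \<times> UNIV \<Longrightarrow> (u2 has_derivative (\<lambda>(h, k). u12 z * h + u22 z * k)) (at z)"
    and periodic_u: "\<And>t x. t0 \<le> t \<Longrightarrow> u (t, x + 2 * pi) = u (t, x)"
    and periodic_u1: "\<And>t x. t0 \<le> t \<Longrightarrow> u1 (t, x + 2 * pi) = u1 (t, x)"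
    and periodic_u2: "\<And>t x. t0 \<le> t \<Longrightarrow> u2 (t, x + 2 * pi) = u2 (t, x)"
begin

lemma has_real_derivative_characteristic:
  fixes t x e :: real
  assumes "t0 < t"
  defines "z \<equiv> (t, x + e * exp (- t))"
  shows "((\<lambda>s. u (s, x + e * exp (- s))) has_real_derivative u1 z - e * exp (- t) * u2 z) (at t)"
    and "((\<lambda>s. u1 (s, x + e * exp (- s))) has_real_derivative u11 z - e * exp (- t) * u12 z) (at t)"
    and "((\<lambda>s. u2 (s, x + e * exp (- s))) has_real_derivative u12 z - e * exp (- t) * u22 z) (at t)"
proof -
  have z: "z \<in> {t0<..} \<times> UNIV" using assms by (simp add: z_def)
  have curve: "((\<lambda>s. x + e * exp (- s)) has_real_derivative - (e * exp (- t))) (at t)"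
    by (auto intro!: derivative_eq_intros)
  have along: "((\<lambda>s. g (s, x + e * exp (- s))) has_real_derivative a - e * exp (- t) * b) (at t)"
    if "(g has_derivative (\<lambda>(h, k). a * h + b * k)) (at z)" for g a b
    using has_real_derivative_along_graph[where S = UNIV and T = UNIV, OF _ curve] that
    by (simp add: z_def)
  show "((\<lambda>s. u (s, x + e * exp (- s))) has_real_derivative u1 z - e * exp (- t) * u2 z) (at t)"
    by (rule along[OF has_derivative_u[OF z]])
  show "((\<lambda>s. u1 (s, x + e * exp (- s))) has_real_derivative u11 z - e * exp (- t) * u12 z) (at t)"
    by (rule along[OF has_derivative_u1[OF z]])
  show "((\<lambda>s. u2 (s, x + e * exp (- s))) has_real_derivative u12 z - e * exp (- t) * u22 z) (at t)"
    by (rule along[OF has_derivative_u2[OF z]])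
qed

lemma has_real_derivative_time:
  "t0 < t \<Longrightarrow> ((\<lambda>s. u (s, x)) has_real_derivative u1 (t, x)) (at t)"
  using has_real_derivative_characteristic(1)[of t x 0] by simp

end

locale gowdy =
  P: periodic_C2_strip t0 p p1 p2 p11 p12 p22 + Q: periodic_C2_strip t0 q q1 q2 q11 q12 q22
  for t0 :: real and p p1 p2 p11 p12 p22 q q1 q2 q11 q12 q22 :: "real \<times> real \<Rightarrow> real" +
  assumes t0_ge_2: "2 \<le> t0"
    and wave_P: "\<And>z. z \<in> {t0<..} \<times> UNIV \<Longrightarrow>
       p11 z - exp (-2 * fst z) * p22 z - exp (2 * p z) * ((q1 z)\<^sup>2 - exp (-2 * fst z) * (q2 z)\<^sup>2) = 0"
    and wave_Q: "\<And>z. z \<in> {t0<..} \<times> UNIV \<Longrightarrow>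
       q11 z - exp (-2 * fst z) * q22 z + 2 * (p1 z * q1 z - exp (-2 * fst z) * p2 z * q2 z) = 0"
begin

text \<open>For a sign \<open>e\<close>, \<open>dP e\<close> is \<open>(\<partial>\<^sub>\<tau> + e e\<^sup>-\<^sup>\<tau> \<partial>\<^sub>\<theta>) P\<close> and \<open>dQ e\<close> is
  \<open>e\<^sup>P (\<partial>\<^sub>\<tau> + e e\<^sup>-\<^sup>\<tau> \<partial>\<^sub>\<theta>) Q\<close>; \<open>energy e\<close> is the expression under the \<open>e\<close>-th supremum
  in \<open>F\<close>, so that \<open>F(\<tau>\<^sub>0)\<close> is the mean of \<open>initial_energy 1\<close> and \<open>initial_energy (-1)\<close>.\<close>
definition "dP e z = p1 z + e * exp (- fst z) * p2 z"
definition "dev e z = dP e z - p z / fst z"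
definition "dQ e z = exp (p z) * (q1 z + e * exp (- fst z) * q2 z)"
definition "energy e z = (dev e z)\<^sup>2 + (dQ e z)\<^sup>2"
definition "initial_energy e = (SUP x. energy e (t0, x))"

lemma continuous_energy: "continuous_on ({t0..} \<times> UNIV) (energy e)"
  and continuous_dQ_sq: "continuous_on ({t0..} \<times> UNIV) (\<lambda>z. (dQ e z)\<^sup>2)"
proof -
  have "\<forall>z\<in>{t0..} \<times> UNIV. fst z \<noteq> 0" using t0_ge_2 by auto
  then show "continuous_on ({t0..} \<times> UNIV) (energy e)" "continuous_on ({t0..} \<times> UNIV) (\<lambda>z. (dQ e z)\<^sup>2)"
    unfolding energy_def dev_def dP_def dQ_def
    by (intro continuous_intros P.continuous_u P.continuous_u1 P.continuous_u2
        Q.continuous_u1 Q.continuous_u2; simp)+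
qed

lemma periodic_energy: "t0 \<le> t \<Longrightarrow> energy e (t, x + 2 * pi) = energy e (t, x)"
  and periodic_dQ: "t0 \<le> t \<Longrightarrow> dQ e (t, x + 2 * pi) = dQ e (t, x)"
  by (simp_all add: energy_def dev_def dP_def dQ_def P.periodic_u P.periodic_u1 P.periodic_u2
      Q.periodic_u1 Q.periodic_u2)

lemma energy_le_initial_energy: "energy e (t0, x) \<le> initial_energy e"
proof -
  obtain M where "\<And>t x. t \<in> {t0..t0} \<Longrightarrow> energy e (t, x) \<le> M"
    by (rule periodic_strip_bounded[where g = "energy e"])
      (auto intro: continuous_on_subset[OF continuous_energy] periodic_energy)
  then have "bdd_above (range (\<lambda>x. energy e (t0, x)))" by (auto simp: bdd_above_def)
  then show ?thesis unfolding initial_energy_def by (rule cSUP_upper[rotated]) simp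
qed

lemma initial_energy_nonneg: "0 \<le> initial_energy e"
  using energy_le_initial_energy[of e 0] by (smt (verit) energy_def sum_power2_ge_zero)

lemma exp_double:
  fixes y :: real
  shows "exp (2 * y) = exp y * exp y" "exp (-2 * y) = exp (- y) * exp (- y)"
  by (simp_all add: exp_add[symmetric])

lemma initial_energy_explicit:
  "initial_energy e = (SUP x. (p1 (t0, x) - p (t0, x) / t0 + e * exp (- t0) * p2 (t0, x))\<^sup>2
      + exp (2 * p (t0, x)) * (q1 (t0, x) + e * exp (- t0) * q2 (t0, x))\<^sup>2)"
proof -
  have sq: "(exp y * m)\<^sup>2 = exp (2 * y) * m\<^sup>2" for y m :: real
    by (simp add: power_mult_distrib exp_double power2_eq_square)
  have "energy e (t0, x) = (p1 (t0, x) - p (t0, x) / t0 + e * exp (- t0) * p2 (t0, x))\<^sup>2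
      + exp (2 * p (t0, x)) * (q1 (t0, x) + e * exp (- t0) * q2 (t0, x))\<^sup>2" for x
    unfolding energy_def dev_def dP_def dQ_def sq fst_conv by (simp add: algebra_simps)
  then show ?thesis by (simp add: initial_energy_def)
qed

lemma weighted_Q_gradient_eq:
  "\<bar>exp (2 * p (t, x)) * ((q1 (t, x))\<^sup>2 + exp (-2 * t) * (q2 (t, x))\<^sup>2)\<bar>
    = ((dQ 1 (t, x))\<^sup>2 + (dQ (-1) (t, x))\<^sup>2) / 2"
proof -
  have "exp (2 * p (t, x)) * ((q1 (t, x))\<^sup>2 + exp (-2 * t) * (q2 (t, x))\<^sup>2)
      = ((dQ 1 (t, x))\<^sup>2 + (dQ (-1) (t, x))\<^sup>2) / 2"
    unfolding dQ_def exp_double by (simp add: power2_eq_square field_simps)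
  moreover have "0 \<le> ((dQ 1 (t, x))\<^sup>2 + (dQ (-1) (t, x))\<^sup>2) / 2" by simp
  ultimately show ?thesis by (simp only: abs_of_nonneg)
qed

lemma has_real_derivative_dev_characteristic:
  fixes t x e :: real
  assumes "t0 < t" "e = 1 \<or> e = -1"
  defines "z \<equiv> (t, x + e * exp (- t))"
  shows "((\<lambda>s. dev e (s, x + e * exp (- s))) has_real_derivative
     dQ 1 z * dQ (-1) z - (dev e z - dev (-e) z) / 2 - dev (-e) z / t) (at t)"
proof -
  have "t \<noteq> 0" using assms(1) t0_ge_2 by simp
  have "((\<lambda>s. dev e (s, x + e * exp (- s))) has_real_derivative
     (p11 z - e * exp (- t) * p12 z) + (e * (- exp (- t)) * p2 z + e * exp (- t) * (p12 z - e * exp (- t) * p22 z))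
      - ((p1 z - e * exp (- t) * p2 z) * t - p z) / (t * t)) (at t)"
    unfolding dev_def dP_def fst_conv z_def using \<open>t \<noteq> 0\<close>
    by (auto intro!: derivative_eq_intros P.has_real_derivative_characteristic[OF assms(1)])
  moreover
  have wave: "p11 z = exp (- t) * exp (- t) * p22 z
      + exp (p z) * exp (p z) * ((q1 z)\<^sup>2 - exp (- t) * exp (- t) * (q2 z)\<^sup>2)"
    using wave_P[of z] assms(1) unfolding z_def exp_double by (simp add: algebra_simps)
  have "(p11 z - e * exp (- t) * p12 z) + (e * (- exp (- t)) * p2 z + e * exp (- t) * (p12 z - e * exp (- t) * p22 z))
      - ((p1 z - e * exp (- t) * p2 z) * t - p z) / (t * t)
      = dQ 1 z * dQ (-1) z - (dev e z - dev (-e) z) / 2 - dev (-e) z / t"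
    using assms(2) \<open>t \<noteq> 0\<close> unfolding wave dev_def dP_def dQ_def
    by (auto simp: z_def field_simps power2_eq_square)
  ultimately show ?thesis by simp
qed

lemma has_real_derivative_dQ_characteristic:
  fixes t x e :: real
  assumes "t0 < t" "e = 1 \<or> e = -1"
  defines "z \<equiv> (t, x + e * exp (- t))"
  shows "((\<lambda>s. dQ e (s, x + e * exp (- s))) has_real_derivative
     - dP e z * dQ (-e) z - (dQ e z - dQ (-e) z) / 2) (at t)"
proof -
  have "((\<lambda>s. dQ e (s, x + e * exp (- s))) has_real_derivative
     exp (p z) * (p1 z - e * exp (- t) * p2 z) * (q1 z + e * exp (- t) * q2 z)
     + exp (p z) * ((q11 z - e * exp (- t) * q12 z)
       + (e * (- exp (- t)) * q2 z + e * exp (- t) * (q12 z - e * exp (- t) * q22 z)))) (at t)"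
    unfolding dQ_def fst_conv z_def
    by (auto intro!: derivative_eq_intros P.has_real_derivative_characteristic[OF assms(1)]
        Q.has_real_derivative_characteristic[OF assms(1)])
  moreover
  have wave: "q11 z = exp (- t) * exp (- t) * q22 z - 2 * (p1 z * q1 z - exp (- t) * exp (- t) * p2 z * q2 z)"
    using wave_Q[of z] assms(1) unfolding z_def exp_double by (simp add: algebra_simps)
  have "exp (p z) * (p1 z - e * exp (- t) * p2 z) * (q1 z + e * exp (- t) * q2 z)
     + exp (p z) * ((q11 z - e * exp (- t) * q12 z)
       + (e * (- exp (- t)) * q2 z + e * exp (- t) * (q12 z - e * exp (- t) * q22 z)))
      = - dP e z * dQ (-e) z - (dQ e z - dQ (-e) z) / 2"
    using assms(2) unfolding wave dP_def dQ_def by (auto simp: z_def field_simps power2_eq_square)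
  ultimately show ?thesis by simp
qed

lemma has_real_derivative_energy_characteristic:
  fixes t x e :: real
  assumes "t0 < t" "e = 1 \<or> e = -1"
  defines "z \<equiv> (t, x + e * exp (- t))"
  shows "((\<lambda>s. energy e (s, x + e * exp (- s))) has_real_derivative
     - energy e z + (1 - 2 / t) * dev e z * dev (-e) z + (1 - 2 * p z / t) * dQ e z * dQ (-e) z) (at t)"
proof -
  have "((\<lambda>s. energy e (s, x + e * exp (- s))) has_real_derivative
     2 * dev e z * (dQ 1 z * dQ (-1) z - (dev e z - dev (-e) z) / 2 - dev (-e) z / t)
      + 2 * dQ e z * (- dP e z * dQ (-e) z - (dQ e z - dQ (-e) z) / 2)) (at t)"
    unfolding energy_def z_def
    by (auto intro!: derivative_eq_intros has_real_derivative_dev_characteristic[OF assms(1,2)]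
        has_real_derivative_dQ_characteristic[OF assms(1,2)])
  then show ?thesis
    using assms t0_ge_2 unfolding energy_def dev_def
    by (elim DERIV_cong disjE) (auto simp: z_def field_simps power2_eq_square)
qed

lemma has_real_derivative_dQ_sq_characteristic:
  fixes t x e :: real
  assumes "t0 < t" "e = 1 \<or> e = -1"
  defines "z \<equiv> (t, x + e * exp (- t))"
  shows "((\<lambda>s. (dQ e (s, x + e * exp (- s)))\<^sup>2) has_real_derivative
     - (dQ e z)\<^sup>2 + (1 - 2 * dP e z) * dQ e z * dQ (-e) z) (at t)"
proof -
  have "((\<lambda>s. (dQ e (s, x + e * exp (- s)))\<^sup>2) has_real_derivative
     2 * dQ e z * (- dP e z * dQ (-e) z - (dQ e z - dQ (-e) z) / 2)) (at t)"
    unfolding z_def by (auto intro!: derivative_eq_intros has_real_derivative_dQ_characteristic[OF assms(1,2)])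
  then show ?thesis
    by (rule DERIV_cong) (simp add: field_simps power2_eq_square)
qed

end

section \<open>Energy and decay estimates\<close>

locale gowdy_small_data = gowdy +
  fixes \<gamma> \<alpha> :: real
  assumes alpha: "0 < \<alpha>" "\<alpha> < \<gamma>"
    and initial_P: "\<And>x. 1 \<le> p (t0, x) \<and> p (t0, x) \<le> t0 - 1"
    and initial_P_ratio: "\<And>x. \<gamma> \<le> p (t0, x) / t0 \<and> p (t0, x) / t0 \<le> 1 - \<gamma>"
    and initial_energy_small: "(initial_energy 1 + initial_energy (-1)) / 2 \<le> (\<gamma> - \<alpha>)\<^sup>2"
begin

definition "F0 = (initial_energy 1 + initial_energy (-1)) / 2"
definition "eps = ((\<gamma> - \<alpha> / 2)\<^sup>2 - (\<gamma> - \<alpha>)\<^sup>2) / 4"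
definition "K = sqrt (F0 + 2 * eps)"

text \<open>A strict supersolution of the comparison system
  \<open>w\<^sub>e' = - w\<^sub>e + (1 - 2/\<tau>) (w\<^sub>1 + w\<^sub>-\<^sub>1) / 2\<close> obtained from the energy equation by AM-GM:
  the mean of \<open>w\<^sub>1\<close> and \<open>w\<^sub>-\<^sub>1\<close> decays like \<open>(\<tau>\<^sub>0/\<tau>)\<^sup>2\<close>, their difference like \<open>e\<^sup>-\<^sup>\<tau>\<close>, and the
  \<open>eps\<close> term makes the inequality strict.\<close>
definition "barrier e t = (2 * F0 * (t0 / t)\<^sup>2 + e * (initial_energy 1 - initial_energy (-1)) * exp (- (t - t0))) / 2
   + eps * (2 * (t0 / t)\<^sup>2 - (t0 / t) ^ 3)"

lemma eps_pos: "0 < eps"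
proof -
  have "(\<gamma> - \<alpha>)\<^sup>2 < (\<gamma> - \<alpha> / 2)\<^sup>2" using alpha by (intro power_strict_mono) auto
  then show ?thesis by (simp add: eps_def)
qed

lemma K_nonneg: "0 \<le> K" and K_sq: "K\<^sup>2 = F0 + 2 * eps" and K_less: "K < \<gamma> - \<alpha> / 2"
proof -
  have "0 \<le> F0" using initial_energy_nonneg[of 1] initial_energy_nonneg[of "-1"] by (simp add: F0_def)
  then show "0 \<le> K" "K\<^sup>2 = F0 + 2 * eps" using eps_pos by (simp_all add: K_def)
  have "(\<gamma> - \<alpha>)\<^sup>2 < (\<gamma> - \<alpha> / 2)\<^sup>2" using eps_pos by (simp add: eps_def)
  moreover have "F0 + 2 * eps = F0 + ((\<gamma> - \<alpha> / 2)\<^sup>2 - (\<gamma> - \<alpha>)\<^sup>2) / 2" by (simp add: eps_def)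
  ultimately have "F0 + 2 * eps < (\<gamma> - \<alpha> / 2)\<^sup>2"
    using initial_energy_small unfolding F0_def by argo
  then have "K < sqrt ((\<gamma> - \<alpha> / 2)\<^sup>2)" unfolding K_def by (rule real_sqrt_less_mono)
  then show "K < \<gamma> - \<alpha> / 2" using alpha by simp
qed

lemma barrier_initial: "e = 1 \<or> e = -1 \<Longrightarrow> barrier e t0 = initial_energy e + eps"
  using t0_ge_2 by (auto simp: barrier_def F0_def field_simps)

lemma barrier_sum_le: "0 < t \<Longrightarrow> barrier 1 t + barrier (-1) t \<le> 2 * K\<^sup>2 * (t0 / t)\<^sup>2"
proof -
  assume "0 < t"
  then have "eps * (t0 / t) ^ 3 \<ge> 0" using t0_ge_2 eps_pos by simp
  moreover have "barrier 1 t + barrier (-1) t = 2 * F0 * (t0 / t)\<^sup>2 + 2 * eps * (2 * (t0 / t)\<^sup>2 - (t0 / t) ^ 3)"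
    by (simp add: barrier_def field_simps)
  ultimately show ?thesis by (simp add: K_sq algebra_simps)
qed

lemma has_real_derivative_barrier:
  assumes "0 < t" "e = 1 \<or> e = -1"
  shows "(barrier e has_real_derivative
    - barrier e t + (1 - 2 / t) * (barrier 1 t + barrier (-1) t) / 2 + eps * t0 ^ 3 / t ^ 4) (at t)"
proof -
  define u where "u = t0 / t"
  define v where "v = 1 / t"
  have "(barrier e has_real_derivative
     - 2 * F0 * (t0 / t)\<^sup>2 * (1 / t) - e * (initial_energy 1 - initial_energy (-1)) * exp (- (t - t0)) / 2
      + eps * (- 4 * (t0 / t)\<^sup>2 * (1 / t) + 3 * (t0 / t) ^ 3 * (1 / t))) (at t)"
    unfolding barrier_def using assms(1)
    by (auto intro!: derivative_eq_intros simp: power2_eq_square power3_eq_cube field_simps)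
  moreover have "- 2 * F0 * (t0 / t)\<^sup>2 * (1 / t) - e * (initial_energy 1 - initial_energy (-1)) * exp (- (t - t0)) / 2
      + eps * (- 4 * (t0 / t)\<^sup>2 * (1 / t) + 3 * (t0 / t) ^ 3 * (1 / t))
     = - barrier e t + (1 - 2 / t) * (barrier 1 t + barrier (-1) t) / 2 + eps * t0 ^ 3 / t ^ 4"
  proof -
    have uv: "t0 / t = u" "1 / t = v" "2 / t = 2 * v" "eps * t0 ^ 3 / t ^ 4 = eps * u ^ 3 * v"
      using assms(1) by (simp_all add: u_def v_def field_simps power3_eq_cube power4_eq_xxxx)
    show ?thesis unfolding barrier_def uv using assms(2)
      by (auto simp: field_simps power2_eq_square power3_eq_cube)
  qed
  ultimately show ?thesis by simp
qed

lemma continuous_barrier: "continuous_on {t0..} (barrier e)"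
  unfolding barrier_def using t0_ge_2 by (intro continuous_intros) auto

lemma P_drift_bound:
  assumes "0 < u" "energy 1 (u, x) \<le> barrier 1 u" "energy (-1) (u, x) \<le> barrier (-1) u"
  shows "\<bar>p1 (u, x) - p (u, x) / u\<bar> \<le> K * t0 / u"
proof -
  define a b where "a = dev 1 (u, x)" and "b = dev (-1) (u, x)"
  have "(a + b)\<^sup>2 \<le> 2 * (a\<^sup>2 + b\<^sup>2)"
    using zero_le_power2[of "a - b"] by (simp add: power2_eq_square algebra_simps)
  also have "\<dots> \<le> 2 * (barrier 1 u + barrier (-1) u)"
    using assms(2,3) zero_le_power2[of "dQ 1 (u, x)"] zero_le_power2[of "dQ (-1) (u, x)"]
    unfolding a_def b_def energy_def by (smt (verit))
  also have "\<dots> \<le> (2 * K * t0 / u)\<^sup>2"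
    using barrier_sum_le[OF assms(1)] by (simp add: power_mult_distrib power_divide)
  finally have bound: "\<bar>a + b\<bar> \<le> \<bar>2 * K * t0 / u\<bar>"
    by (simp only: abs_le_square_iff)
  have "p1 (u, x) - p (u, x) / u = (a + b) / 2" by (simp add: a_def b_def dev_def dP_def)
  then have "\<bar>p1 (u, x) - p (u, x) / u\<bar> = \<bar>(a + b) / 2\<bar>" by (simp only:)
  also have "\<dots> = \<bar>a + b\<bar> / 2" by simp
  also have "\<dots> \<le> \<bar>2 * K * t0 / u\<bar> / 2" using bound by simp
  also have "\<dots> = K * t0 / u" using K_nonneg t0_ge_2 assms(1) by simp
  finally show ?thesis .
qed

lemma P_bounds:
  assumes below: "\<And>s y e. t0 \<le> s \<Longrightarrow> s \<le> T \<Longrightarrow> e = 1 \<or> e = -1 \<Longrightarrow> energy e (s, y) \<le> barrier e s"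
    and s: "t0 \<le> s" "s \<le> T"
  shows "1 \<le> p (s, x)" "p (s, x) \<le> s - 1" "(\<gamma> - K) * s \<le> p (s, x)" "p (s, x) \<le> (1 - \<gamma> + K) * s"
proof -
  define r where "r = p (t0, x) / t0"
  have r: "\<gamma> \<le> r" "r \<le> 1 - \<gamma>" "p (t0, x) = r * t0" using initial_P_ratio[of x] t0_ge_2 by (auto simp: r_def)
  have "\<bar>p (s, x) / s - r\<bar> \<le> K * t0 / t0 - K * t0 / s"
    unfolding r_def
  proof (rule quotient_drift_bound[where f = "\<lambda>v. p (v, x)" and f' = "\<lambda>v. p1 (v, x)"])
    show "continuous_on {t0..s} (\<lambda>v. p (v, x))"
      by (rule continuous_on_compose2[OF P.continuous_u]) (auto intro: continuous_intros)
    show "((\<lambda>v. p (v, x)) has_real_derivative p1 (u, x)) (at u)" if "t0 < u" for u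
      using P.has_real_derivative_time[OF that] .
    show "\<bar>p1 (u, x) - p (u, x) / u\<bar> \<le> K * t0 / u" if "t0 < u" "u < s" for u
      using P_drift_bound[of u x] below[of u 1 x] below[of u "-1" x] that s t0_ge_2 by auto
  qed (use s t0_ge_2 in auto)
  then have lo: "(r - K) * s + K * t0 \<le> p (s, x)" and hi: "p (s, x) \<le> (r + K) * s - K * t0"
    using s t0_ge_2 by (auto simp: abs_le_iff field_simps)
  have "K \<le> \<gamma>" using K_less alpha by simp
  have "(r - K) * t0 \<le> (r - K) * s" using s r \<open>K \<le> \<gamma>\<close> by (intro mult_left_mono) auto
  then show "1 \<le> p (s, x)" using lo initial_P[of x] r(3) by (simp add: algebra_simps)
  have "(r + K - 1) * s \<le> (r + K - 1) * t0" using s r \<open>K \<le> \<gamma>\<close> by (intro mult_left_mono_neg) auto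
  then show "p (s, x) \<le> s - 1" using hi initial_P[of x] r(3) by (simp add: algebra_simps)
  have "K * t0 \<ge> 0" using K_nonneg t0_ge_2 by simp
  moreover have "(\<gamma> - K) * s \<le> (r - K) * s" "(r + K) * s \<le> (1 - \<gamma> + K) * s"
    using s r t0_ge_2 by (intro mult_right_mono; simp)+
  ultimately show "(\<gamma> - K) * s \<le> p (s, x)" "p (s, x) \<le> (1 - \<gamma> + K) * s" using lo hi by linarith+
qed

lemma energy_cross_terms_le:
  assumes T: "0 < T" and e: "e = 1 \<or> e = -1"
    and below: "\<And>e'. e' = 1 \<or> e' = -1 \<Longrightarrow> energy e' z \<le> barrier e' T"
    and P: "1 \<le> p z" "p z \<le> T - 1"
  shows "(1 - 2 / T) * dev e z * dev (-e) z + (1 - 2 * p z / T) * dQ e z * dQ (-e) z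
    \<le> (1 - 2 / T) * (barrier 1 T + barrier (-1) T) / 2"
proof -
  define c k where "c = 1 - 2 / T" and "k = 1 - 2 * p z / T"
  have "2 / T \<le> 2 * p z / T" "2 * p z / T \<le> 2 * (T - 1) / T"
    using T P by (simp_all add: divide_right_mono)
  moreover have "2 * (T - 1) / T = 2 - 2 / T" using T by (simp add: field_simps)
  ultimately have "0 \<le> c" "\<bar>k\<bar> \<le> c" unfolding c_def k_def by (auto simp: abs_le_iff)
  have "c * dev e z * dev (-e) z + k * dQ e z * dQ (-e) z
      \<le> c * (((dev e z)\<^sup>2 + (dev (-e) z)\<^sup>2) / 2) + c * (((dQ e z)\<^sup>2 + (dQ (-e) z)\<^sup>2) / 2)"
    by (intro add_mono mult_le_mean_squares) (use \<open>0 \<le> c\<close> \<open>\<bar>k\<bar> \<le> c\<close> in auto)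
  also have "\<dots> = c * ((energy 1 z + energy (-1) z) / 2)"
    using e by (auto simp: energy_def field_simps)
  also have "\<dots> \<le> c * ((barrier 1 T + barrier (-1) T) / 2)"
    using below[of 1] below[of "-1"] \<open>0 \<le> c\<close> by (intro mult_left_mono) auto
  finally show ?thesis unfolding c_def k_def by simp
qed

lemma energy_below_barrier:
  assumes "t0 \<le> t" "e = 1 \<or> e = -1"
  shows "energy e (t, y) < barrier e t"
proof (rule barrier_principle[where f = energy and W = barrier and a = t0, OF _ _ _ _ _ assms])
  show "continuous_on ({t0..} \<times> UNIV) (energy e)" for e by (rule continuous_energy)
  show "continuous_on {t0..} (barrier e)" for e by (rule continuous_barrier)
  show "energy e (t, x + 2 * pi) = energy e (t, x)" if "t0 \<le> t" for e t x
    using that by (rule periodic_energy)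
  show "energy e (t0, y) < barrier e t0" if "e = 1 \<or> e = -1" for e y
    using energy_le_initial_energy[of e y] barrier_initial[OF that] eps_pos by linarith
next
  fix T e x0
  assume T: "t0 < T" and e: "e = 1 \<or> e = -1"
    and below: "\<And>s y e'. t0 \<le> s \<Longrightarrow> s \<le> T \<Longrightarrow> e' = 1 \<or> e' = -1 \<Longrightarrow> energy e' (s, y) \<le> barrier e' s"
    and touch: "energy e (T, x0 + e * exp (- T)) = barrier e T"
  define z where "z = (T, x0 + e * exp (- T))"
  have "0 < T" using T t0_ge_2 by simp
  have "1 \<le> p z" unfolding z_def by (rule P_bounds(1)[OF below]) (use T in auto)
  moreover have "p z \<le> T - 1" unfolding z_def by (rule P_bounds(2)[OF below]) (use T in auto)
  ultimately have cross: "(1 - 2 / T) * dev e z * dev (-e) z + (1 - 2 * p z / T) * dQ e z * dQ (-e) z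
      \<le> (1 - 2 / T) * (barrier 1 T + barrier (-1) T) / 2"
    using T by (intro energy_cross_terms_le[OF \<open>0 < T\<close> e]) (auto simp: z_def intro: below)
  have "0 < eps * t0 ^ 3 / T ^ 4" using eps_pos t0_ge_2 \<open>0 < T\<close> by simp
  then have "(- energy e z + (1 - 2 / T) * dev e z * dev (-e) z + (1 - 2 * p z / T) * dQ e z * dQ (-e) z)
      - (- barrier e T + (1 - 2 / T) * (barrier 1 T + barrier (-1) T) / 2 + eps * t0 ^ 3 / T ^ 4) < 0"
    using touch[folded z_def] cross by linarith
  moreover have "((\<lambda>s. energy e (s, x0 + e * exp (- s)) - barrier e s) has_real_derivative
     (- energy e z + (1 - 2 / T) * dev e z * dev (-e) z + (1 - 2 * p z / T) * dQ e z * dQ (-e) z)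
      - (- barrier e T + (1 - 2 / T) * (barrier 1 T + barrier (-1) T) / 2 + eps * t0 ^ 3 / T ^ 4)) (at T)"
    unfolding z_def
    by (rule DERIV_diff[OF has_real_derivative_energy_characteristic[OF T e] has_real_derivative_barrier[OF \<open>0 < T\<close> e]])
  ultimately show "\<exists>D<0. ((\<lambda>s. energy e (s, x0 + e * exp (- s)) - barrier e s) has_real_derivative D) (at T)"
    by blast
qed

lemma P_ratio_bounds:
  assumes "t0 \<le> t"
  shows "\<gamma> - K \<le> p (t, y) / t" "p (t, y) / t \<le> 1 - \<gamma> + K"
proof -
  have "0 < t" using assms t0_ge_2 by simp
  have "(\<gamma> - K) * t \<le> p (t, y)"
    by (rule P_bounds(3)[OF less_imp_le[OF energy_below_barrier]]) (use assms in auto)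
  moreover have "p (t, y) \<le> (1 - \<gamma> + K) * t"
    by (rule P_bounds(4)[OF less_imp_le[OF energy_below_barrier]]) (use assms in auto)
  ultimately show "\<gamma> - K \<le> p (t, y) / t" "p (t, y) / t \<le> 1 - \<gamma> + K"
    using \<open>0 < t\<close> by (simp_all add: field_simps)
qed

lemma dev_bound:
  assumes "t0 \<le> t" "e = 1 \<or> e = -1"
  shows "\<bar>dev e (t, y)\<bar> \<le> 2 * K * t0 / t"
proof -
  have "0 < t" using assms t0_ge_2 by simp
  have "(dev e (t, y))\<^sup>2 \<le> energy 1 (t, y) + energy (-1) (t, y)"
    using assms(2) by (auto simp: energy_def)
  also have "\<dots> \<le> barrier 1 t + barrier (-1) t"
    using energy_below_barrier[OF assms(1), of 1 y] energy_below_barrier[OF assms(1), of "-1" y] by simp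
  also have "\<dots> \<le> 2 * K\<^sup>2 * (t0 / t)\<^sup>2" by (rule barrier_sum_le[OF \<open>0 < t\<close>])
  also have "\<dots> \<le> 4 * K\<^sup>2 * (t0 / t)\<^sup>2" by (intro mult_right_mono) auto
  also have "\<dots> = (2 * K * t0 / t)\<^sup>2" by (simp add: power_mult_distrib power_divide)
  finally have "\<bar>dev e (t, y)\<bar> \<le> \<bar>2 * K * t0 / t\<bar>" by (simp only: abs_le_square_iff)
  then show ?thesis using K_nonneg t0_ge_2 \<open>0 < t\<close> by simp
qed

definition "mu = (\<gamma> - K - \<alpha> / 2) / 2"
definition "t1 = max t0 (2 * K * t0 / mu)"

lemma mu_pos: "0 < mu"
  using K_less by (simp add: mu_def)

lemma dP_bound:
  assumes "t1 \<le> t" "e = 1 \<or> e = -1"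
  shows "\<bar>1 - 2 * dP e (t, y)\<bar> \<le> 1 - \<alpha> - 2 * mu"
proof -
  have "t0 \<le> t" using assms(1) by (simp add: t1_def)
  then have "0 < t" using t0_ge_2 by simp
  have "2 * K * t0 / mu \<le> t" using assms(1) by (simp add: t1_def)
  then have "2 * K * t0 / t \<le> mu" using mu_pos \<open>0 < t\<close> by (simp add: field_simps)
  then have "\<bar>dev e (t, y)\<bar> \<le> mu" using dev_bound[OF \<open>t0 \<le> t\<close> assms(2), of y] by linarith
  moreover have "dP e (t, y) = dev e (t, y) + p (t, y) / t" by (simp add: dev_def)
  moreover have "2 * mu = \<gamma> - K - \<alpha> / 2" by (simp add: mu_def)
  ultimately show ?thesis
    using P_ratio_bounds[OF \<open>t0 \<le> t\<close>, of y] unfolding abs_le_iff by linarith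
qed

lemma dQ_sq_below_decaying_barrier:
  assumes init: "\<And>x e. e = 1 \<or> e = -1 \<Longrightarrow> (dQ e (t1, x))\<^sup>2 < M"
    and "t1 \<le> t" "e = 1 \<or> e = -1"
  shows "(dQ e (t, x))\<^sup>2 < M * exp (- \<alpha> * (t - t1))"
proof (rule barrier_principle[where f = "\<lambda>e z. (dQ e z)\<^sup>2" and W = "\<lambda>_ s. M * exp (- \<alpha> * (s - t1))"
      and a = t1, OF _ _ _ _ _ assms(2,3)])
  have "t0 \<le> t1" by (simp add: t1_def)
  show "continuous_on ({t1..} \<times> UNIV) (\<lambda>z. (dQ e z)\<^sup>2)" for e
    using \<open>t0 \<le> t1\<close> by (intro continuous_on_subset[OF continuous_dQ_sq]) auto
  show "continuous_on {t1..} (\<lambda>s. M * exp (- \<alpha> * (s - t1)))" by (intro continuous_intros)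
  show "(dQ e (t, x + 2 * pi))\<^sup>2 = (dQ e (t, x))\<^sup>2" if "t1 \<le> t" for e t x
    using that \<open>t0 \<le> t1\<close> periodic_dQ[of t e x] by simp
  show "(dQ e (t1, y))\<^sup>2 < M * exp (- \<alpha> * (t1 - t1))" if "e = 1 \<or> e = -1" for e y
    using init[OF that] by simp
next
  fix T e x0
  assume T: "t1 < T" and e: "e = 1 \<or> e = -1"
    and below: "\<And>s y e'. t1 \<le> s \<Longrightarrow> s \<le> T \<Longrightarrow> e' = 1 \<or> e' = -1 \<Longrightarrow>
      (dQ e' (s, y))\<^sup>2 \<le> M * exp (- \<alpha> * (s - t1))"
    and touch: "(dQ e (T, x0 + e * exp (- T)))\<^sup>2 = M * exp (- \<alpha> * (T - t1))"
  define z where "z = (T, x0 + e * exp (- T))"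
  define W where "W = M * exp (- \<alpha> * (T - t1))"
  have "t0 < T" using T by (simp add: t1_def)
  have "0 < M" using init[of 1 0] zero_le_power2[of "dQ 1 (t1, 0)"] by linarith
  then have "0 < W" by (simp add: W_def)
  have DW: "((\<lambda>s. M * exp (- \<alpha> * (s - t1))) has_real_derivative - \<alpha> * W) (at T)"
    unfolding W_def by (auto intro!: derivative_eq_intros simp: algebra_simps)
  have k: "\<bar>1 - 2 * dP e z\<bar> \<le> 1 - \<alpha> - 2 * mu" unfolding z_def by (rule dP_bound) (use T e in auto)
  then have "(1 - 2 * dP e z) * dQ e z * dQ (-e) z \<le> (1 - \<alpha> - 2 * mu) * (((dQ e z)\<^sup>2 + (dQ (-e) z)\<^sup>2) / 2)"
    by (rule mult_le_mean_squares)
  also have "\<dots> \<le> (1 - \<alpha> - 2 * mu) * W"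
    using below[of T e "snd z"] below[of T "-e" "snd z"] T e k
    by (intro mult_left_mono) (auto simp: z_def W_def)
  finally have "(1 - 2 * dP e z) * dQ e z * dQ (-e) z \<le> (1 - \<alpha> - 2 * mu) * W" .
  then have "(- (dQ e z)\<^sup>2 + (1 - 2 * dP e z) * dQ e z * dQ (-e) z) - (- \<alpha> * W) \<le> - (2 * mu) * W"
    using touch by (simp add: z_def W_def algebra_simps)
  moreover have "- (2 * mu) * W < 0" using mu_pos \<open>0 < W\<close> by simp
  ultimately have "(- (dQ e z)\<^sup>2 + (1 - 2 * dP e z) * dQ e z * dQ (-e) z) - (- \<alpha> * W) < 0" by linarith
  moreover have "((\<lambda>s. (dQ e (s, x0 + e * exp (- s)))\<^sup>2 - M * exp (- \<alpha> * (s - t1))) has_real_derivative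
     (- (dQ e z)\<^sup>2 + (1 - 2 * dP e z) * dQ e z * dQ (-e) z) - (- \<alpha> * W)) (at T)"
    unfolding z_def by (rule DERIV_diff[OF has_real_derivative_dQ_sq_characteristic[OF \<open>t0 < T\<close> e] DW])
  ultimately show "\<exists>D<0. ((\<lambda>s. (dQ e (s, x0 + e * exp (- s)))\<^sup>2 - M * exp (- \<alpha> * (s - t1)))
      has_real_derivative D) (at T)"
    by blast
qed

lemma dQ_sq_decay:
  obtains M where "\<And>t x e. t1 \<le> t \<Longrightarrow> e = 1 \<or> e = -1 \<Longrightarrow> (dQ e (t, x))\<^sup>2 \<le> M * exp (- \<alpha> * (t - t1))"
proof -
  have "t0 \<le> t1" by (simp add: t1_def)
  have "continuous_on ({t1..t1} \<times> UNIV) (\<lambda>z. (dQ 1 z)\<^sup>2 + (dQ (-1) z)\<^sup>2)"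
    using \<open>t0 \<le> t1\<close> by (intro continuous_intros continuous_on_subset[OF continuous_dQ_sq]) auto
  then obtain M where M: "\<And>t x. t \<in> {t1..t1} \<Longrightarrow> (dQ 1 (t, x))\<^sup>2 + (dQ (-1) (t, x))\<^sup>2 \<le> M"
    by (rule periodic_strip_bounded) (use \<open>t0 \<le> t1\<close> periodic_dQ in auto)
  have "(dQ e (t1, x))\<^sup>2 < M + 1" if "e = 1 \<or> e = -1" for e x
  proof -
    have "(dQ e (t1, x))\<^sup>2 \<le> (dQ 1 (t1, x))\<^sup>2 + (dQ (-1) (t1, x))\<^sup>2" using that by auto
    then show ?thesis using M[of t1 x] by simp
  qed
  then show ?thesis
    using dQ_sq_below_decaying_barrier[of "M + 1"] by (intro that[of "M + 1"]) (simp add: less_imp_le)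
qed

lemma weighted_Q_gradient_decay:
  obtains C where "\<And>t. t0 \<le> t \<Longrightarrow>
    (SUP x. \<bar>exp (2 * p (t, x)) * ((q1 (t, x))\<^sup>2 + exp (-2 * t) * (q2 (t, x))\<^sup>2)\<bar>) \<le> C * exp (- \<alpha> * t)"
proof -
  define G where "G z = ((dQ 1 z)\<^sup>2 + (dQ (-1) z)\<^sup>2) / 2" for z
  have "t0 \<le> t1" by (simp add: t1_def)
  obtain M where M: "\<And>t x e. t1 \<le> t \<Longrightarrow> e = 1 \<or> e = -1 \<Longrightarrow> (dQ e (t, x))\<^sup>2 \<le> M * exp (- \<alpha> * (t - t1))"
    using dQ_sq_decay by blast
  have "continuous_on ({t0..t1} \<times> UNIV) G"
    unfolding G_def by (intro continuous_intros continuous_on_subset[OF continuous_dQ_sq]) auto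
  then obtain M' where M': "\<And>t x. t \<in> {t0..t1} \<Longrightarrow> G (t, x) \<le> M'"
    by (rule periodic_strip_bounded) (use \<open>t0 \<le> t1\<close> periodic_dQ in \<open>auto simp: G_def\<close>)
  have bound: "G (t, x) \<le> (\<bar>M\<bar> + \<bar>M'\<bar>) * exp (- \<alpha> * (t - t1))" if "t0 \<le> t" for t x
  proof (cases "t1 \<le> t")
    case True
    then have "G (t, x) \<le> M * exp (- \<alpha> * (t - t1))" using M[of t 1 x] M[of t "-1" x] by (simp add: G_def)
    also have "\<dots> \<le> (\<bar>M\<bar> + \<bar>M'\<bar>) * exp (- \<alpha> * (t - t1))" by (intro mult_right_mono) auto
    finally show ?thesis .
  next
    case False
    then have "\<alpha> * (t - t1) \<le> 0" using alpha by (intro mult_nonneg_nonpos) auto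
    have "G (t, x) \<le> \<bar>M'\<bar>" using M'[of t x] that False by simp
    also have "\<dots> \<le> \<bar>M'\<bar> * exp (- \<alpha> * (t - t1))"
      using \<open>\<alpha> * (t - t1) \<le> 0\<close> by (simp add: mult_le_cancel_left1)
    also have "\<dots> \<le> (\<bar>M\<bar> + \<bar>M'\<bar>) * exp (- \<alpha> * (t - t1))" by (intro mult_right_mono) auto
    finally show ?thesis .
  qed
  have "exp (- \<alpha> * (t - t1)) = exp (\<alpha> * t1) * exp (- \<alpha> * t)" for t
    by (simp add: exp_add[symmetric] algebra_simps)
  then have "(SUP x. \<bar>exp (2 * p (t, x)) * ((q1 (t, x))\<^sup>2 + exp (-2 * t) * (q2 (t, x))\<^sup>2)\<bar>)
      \<le> ((\<bar>M\<bar> + \<bar>M'\<bar>) * exp (\<alpha> * t1)) * exp (- \<alpha> * t)" if "t0 \<le> t" for t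
    using bound[OF that] unfolding weighted_Q_gradient_eq G_def[symmetric]
    by (intro cSUP_least) (simp_all add: mult.assoc)
  then show ?thesis by (rule that)
qed

end

section \<open>Smooth solutions\<close>

lemma smooth_on2_derivative_family:
  assumes "smooth_on2 S f"
  obtains D d1 d2 where "f \<in> D" "\<And>g. g \<in> D \<Longrightarrow> d1 g \<in> D" "\<And>g. g \<in> D \<Longrightarrow> d2 g \<in> D"
    "\<And>g z. g \<in> D \<Longrightarrow> z \<in> S \<Longrightarrow> (g has_derivative (\<lambda>(h, k). d1 g z * h + d2 g z * k)) (at z within S)"
proof -
  obtain D where "f \<in> D" and D: "\<forall>g\<in>D. \<exists>g1\<in>D. \<exists>g2\<in>D. \<forall>z\<in>S.
      (g has_derivative (\<lambda>(h, k). g1 z * h + g2 z * k)) (at z within S)"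
    using assms unfolding smooth_on2_def by blast
  have "\<forall>g\<in>D. \<exists>d. fst d \<in> D \<and> snd d \<in> D \<and>
      (\<forall>z\<in>S. (g has_derivative (\<lambda>(h, k). fst d z * h + snd d z * k)) (at z within S))"
  proof
    fix g assume "g \<in> D"
    with D obtain g1 g2 where "g1 \<in> D" "g2 \<in> D"
      "\<forall>z\<in>S. (g has_derivative (\<lambda>(h, k). g1 z * h + g2 z * k)) (at z within S)" by blast
    then show "\<exists>d. fst d \<in> D \<and> snd d \<in> D \<and>
      (\<forall>z\<in>S. (g has_derivative (\<lambda>(h, k). fst d z * h + snd d z * k)) (at z within S))"
      by (intro exI[of _ "(g1, g2)"]) simp
  qed
  then obtain d where d: "\<And>g. g \<in> D \<Longrightarrow> fst (d g) \<in> D \<and> snd (d g) \<in> D \<and>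
      (\<forall>z\<in>S. (g has_derivative (\<lambda>(h, k). fst (d g) z * h + snd (d g) z * k)) (at z within S))"
    by (metis bchoice)
  show thesis
  proof (rule that[of D "\<lambda>g. fst (d g)" "\<lambda>g. snd (d g)"])
    show "f \<in> D" by fact
    show "fst (d g) \<in> D" "snd (d g) \<in> D" if "g \<in> D" for g using d[OF that] by simp_all
    show "(g has_derivative (\<lambda>(h, k). fst (d g) z * h + snd (d g) z * k)) (at z within S)"
      if "g \<in> D" "z \<in> S" for g z using d[OF that(1)] that(2) by blast
  qed
qed

lemma at_within_Ici_neq_bot: "t0 \<le> t \<Longrightarrow> at t within {t0..} \<noteq> (bot :: real filter)"
proof (cases "t = t0")
  case True
  have "at t0 within {t0..} = at_right t0" by (rule at_within_Ici_at_right)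
  moreover have "at_right t0 \<noteq> (bot :: real filter)"
    using trivial_limit_at_right_real[of t0] unfolding trivial_limit_def .
  ultimately show ?thesis using True by simp
next
  case False
  assume "t0 \<le> t"
  with False have "t \<in> interior {t0..}" by (intro interiorI[of "{t0<..}"]) auto
  then have "at t within {t0..} = at t" by (rule at_within_interior)
  then show ?thesis by (simp add: at_neq_bot)
qed

lemma dtau_eqI:
  assumes "t0 \<le> t" "((\<lambda>s. U s x) has_real_derivative d) (at t within {t0..})"
  shows "dtau t0 U t x = d"
  using assms unfolding dtau_def has_real_derivative_iff_has_vector_derivative
  by (intro vector_derivative_within at_within_Ici_neq_bot)

lemma dth_eqI: "((\<lambda>y. U t y) has_real_derivative d) (at x) \<Longrightarrow> dth U t x = d"
  unfolding dth_def has_real_derivative_iff_has_vector_derivative by (rule vector_derivative_at)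

lemma strip_partial_derivatives:
  fixes f f1 f2 :: "real \<times> real \<Rightarrow> real"
  assumes "\<And>z. z \<in> {t0..} \<times> UNIV \<Longrightarrow>
      (f has_derivative (\<lambda>(h, k). f1 z * h + f2 z * k)) (at z within {t0..} \<times> UNIV)"
    and "t0 \<le> t"
  shows "((\<lambda>s. f (s, x)) has_real_derivative f1 (t, x)) (at t within {t0..})"
    and "((\<lambda>y. f (t, y)) has_real_derivative f2 (t, x)) (at x)"
proof -
  have "(f has_derivative (\<lambda>(h, k). f1 (t, x) * h + f2 (t, x) * k)) (at (t, x) within {t0..} \<times> UNIV)"
    using assms by simp
  then show "((\<lambda>s. f (s, x)) has_real_derivative f1 (t, x)) (at t within {t0..})"
    and "((\<lambda>y. f (t, y)) has_real_derivative f2 (t, x)) (at x)"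
    by (auto intro: has_real_derivative_fst_partial has_real_derivative_snd_partial simp: assms(2))
qed

lemma strip_partials_dtau_dth:
  fixes U :: "real \<Rightarrow> real \<Rightarrow> real"
  assumes du: "\<And>z. z \<in> {t0..} \<times> UNIV \<Longrightarrow>
      ((\<lambda>(t, x). U t x) has_derivative (\<lambda>(h, k). u1 z * h + u2 z * k)) (at z within {t0..} \<times> UNIV)"
    and du1: "\<And>z. z \<in> {t0..} \<times> UNIV \<Longrightarrow>
      (u1 has_derivative (\<lambda>(h, k). u11 z * h + u12 z * k)) (at z within {t0..} \<times> UNIV)"
    and du2: "\<And>z. z \<in> {t0..} \<times> UNIV \<Longrightarrow>
      (u2 has_derivative (\<lambda>(h, k). u21 z * h + u22 z * k)) (at z within {t0..} \<times> UNIV)"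
    and t: "t0 \<le> t"
  shows "dtau t0 U t x = u1 (t, x)" "dth U t x = u2 (t, x)"
    and "dtau t0 (dtau t0 U) t x = u11 (t, x)" "dth (dth U) t x = u22 (t, x)"
proof -
  have dtau_U: "dtau t0 U s y = u1 (s, y)" and dth_U: "dth U s y = u2 (s, y)" if "t0 \<le> s" for s y
    using strip_partial_derivatives[OF du that, of y]
    by (simp_all add: dtau_eqI[OF that] dth_eqI)
  show "dtau t0 U t x = u1 (t, x)" "dth U t x = u2 (t, x)" using dtau_U dth_U t by auto
  have "((\<lambda>s. dtau t0 U s x) has_real_derivative u11 (t, x)) (at t within {t0..})"
    using strip_partial_derivatives(1)[OF du1 t, of x]
    by (rule has_field_derivative_transform_within[where d = 1]) (use t dtau_U in auto)
  then show "dtau t0 (dtau t0 U) t x = u11 (t, x)" by (rule dtau_eqI[OF t])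
  have "dth U t = (\<lambda>y. u2 (t, y))" using dth_U[OF t] by auto
  then show "dth (dth U) t x = u22 (t, x)"
    using strip_partial_derivatives(2)[OF du2 t, of x] by (simp add: dth_eqI)
qed

lemma strip_partials_periodic:
  fixes U :: "real \<Rightarrow> real \<Rightarrow> real"
  assumes du: "\<And>z. z \<in> {t0..} \<times> UNIV \<Longrightarrow>
      ((\<lambda>(t, x). U t x) has_derivative (\<lambda>(h, k). u1 z * h + u2 z * k)) (at z within {t0..} \<times> UNIV)"
    and per: "\<And>t x. t0 \<le> t \<Longrightarrow> U t (x + 2 * pi) = U t x"
    and t: "t0 \<le> t"
  shows "u1 (t, x + 2 * pi) = u1 (t, x)" "u2 (t, x + 2 * pi) = u2 (t, x)"
proof -
  note partials = strip_partial_derivatives[OF du t, simplified]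
  have "((\<lambda>s. U s x) has_real_derivative u1 (t, x + 2 * pi)) (at t within {t0..})"
    using partials(1)[of "x + 2 * pi"]
    by (rule has_field_derivative_transform_within[where d = 1]) (use t per in auto)
  then have "dtau t0 U t x = u1 (t, x + 2 * pi)" by (rule dtau_eqI[OF t])
  moreover have "dtau t0 U t x = u1 (t, x)" by (rule dtau_eqI[OF t partials(1)])
  ultimately show "u1 (t, x + 2 * pi) = u1 (t, x)" by simp
  have "((\<lambda>y. U t (y + 2 * pi)) has_real_derivative u2 (t, x + 2 * pi)) (at x)"
    using partials(2)[of "x + 2 * pi"] by (simp add: DERIV_shift)
  then have "((\<lambda>y. U t y) has_real_derivative u2 (t, x + 2 * pi)) (at x)"
    using per[OF t] by simp
  from DERIV_unique[OF this partials(2)] show "u2 (t, x + 2 * pi) = u2 (t, x)" .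
qed

lemma smooth_on2_C2:
  assumes "smooth_on2 S f"
  obtains f1 f2 f11 f12 f21 f22 where
    "\<And>z. z \<in> S \<Longrightarrow> (f has_derivative (\<lambda>(h, k). f1 z * h + f2 z * k)) (at z within S)"
    "\<And>z. z \<in> S \<Longrightarrow> (f1 has_derivative (\<lambda>(h, k). f11 z * h + f12 z * k)) (at z within S)"
    "\<And>z. z \<in> S \<Longrightarrow> (f2 has_derivative (\<lambda>(h, k). f21 z * h + f22 z * k)) (at z within S)"
    "continuous_on S f12" "continuous_on S f21"
proof -
  obtain D d1 d2 where D: "f \<in> D" "\<And>g. g \<in> D \<Longrightarrow> d1 g \<in> D" "\<And>g. g \<in> D \<Longrightarrow> d2 g \<in> D"
    and dD: "\<And>g z. g \<in> D \<Longrightarrow> z \<in> S \<Longrightarrow> (g has_derivative (\<lambda>(h, k). d1 g z * h + d2 g z * k)) (at z within S)"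
    using smooth_on2_derivative_family[OF assms] by blast
  show thesis
  proof (rule that[of "d1 f" "d2 f" "d1 (d1 f)" "d2 (d1 f)" "d1 (d2 f)" "d2 (d2 f)"])
    show "(f has_derivative (\<lambda>(h, k). d1 f z * h + d2 f z * k)) (at z within S)"
      "(d1 f has_derivative (\<lambda>(h, k). d1 (d1 f) z * h + d2 (d1 f) z * k)) (at z within S)"
      "(d2 f has_derivative (\<lambda>(h, k). d1 (d2 f) z * h + d2 (d2 f) z * k)) (at z within S)"
      if "z \<in> S" for z
      using dD[OF _ that] D by blast+
    show "continuous_on S (d2 (d1 f))" "continuous_on S (d1 (d2 f))"
      using D by (intro has_derivative_continuous_on[OF dD]; blast)+
  qed
qed

lemma smooth_on2_periodic_C2_strip:
  fixes U :: "real \<Rightarrow> real \<Rightarrow> real"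
  assumes smooth: "smooth_on2 ({t0..} \<times> UNIV) (\<lambda>(t, x). U t x)"
    and per: "\<And>t x. t0 \<le> t \<Longrightarrow> U t (x + 2 * pi) = U t x"
  obtains u1 u2 u11 u12 u22 where "periodic_C2_strip t0 (\<lambda>(t, x). U t x) u1 u2 u11 u12 u22"
    and "\<And>t x. t0 \<le> t \<Longrightarrow> dtau t0 U t x = u1 (t, x)" "\<And>t x. t0 \<le> t \<Longrightarrow> dth U t x = u2 (t, x)"
    and "\<And>t x. t0 \<le> t \<Longrightarrow> dtau t0 (dtau t0 U) t x = u11 (t, x)"
    and "\<And>t x. t0 \<le> t \<Longrightarrow> dth (dth U) t x = u22 (t, x)"
proof -
  define S where "S = {t0..} \<times> (UNIV :: real set)"
  define u where "u = (\<lambda>(t, x). U t x)"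
  obtain u1 u2 u11 u12 u21 u22 where
    du: "\<And>z. z \<in> S \<Longrightarrow> (u has_derivative (\<lambda>(h, k). u1 z * h + u2 z * k)) (at z within S)"
    and du1: "\<And>z. z \<in> S \<Longrightarrow> (u1 has_derivative (\<lambda>(h, k). u11 z * h + u12 z * k)) (at z within S)"
    and du2: "\<And>z. z \<in> S \<Longrightarrow> (u2 has_derivative (\<lambda>(h, k). u21 z * h + u22 z * k)) (at z within S)"
    and c12: "continuous_on S u12" and c21: "continuous_on S u21"
    using smooth_on2_C2[OF smooth[folded S_def u_def]] by blast
  have interior: "at z within S = at z" if "z \<in> {t0<..} \<times> UNIV" for z
    using that unfolding S_def
    by (intro at_within_interior interiorI[of "{t0<..} \<times> UNIV"]) (auto intro!: open_Times)
  have inS: "z \<in> S" if "z \<in> {t0<..} \<times> UNIV" for z using that by (auto simp: S_def)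
  have at: "(u has_derivative (\<lambda>(h, k). u1 z * h + u2 z * k)) (at z)"
    "(u1 has_derivative (\<lambda>(h, k). u11 z * h + u12 z * k)) (at z)"
    "(u2 has_derivative (\<lambda>(h, k). u21 z * h + u22 z * k)) (at z)"
    if "z \<in> {t0<..} \<times> UNIV" for z
    using du[OF inS[OF that]] du1[OF inS[OF that]] du2[OF inS[OF that]] unfolding interior[OF that] .
  have partial_at: "((\<lambda>s. g (s, y)) has_real_derivative a) (at s)" "((\<lambda>v. g (s, v)) has_real_derivative b) (at y)"
    if "(g has_derivative (\<lambda>(h, k). a * h + b * k)) (at (s, y))" for g a b s y
    using has_real_derivative_fst_partial[OF that, of UNIV] has_real_derivative_snd_partial[OF that, of UNIV]
    by simp_all
  have symmetric: "u12 z = u21 z" if z: "z \<in> {t0<..} \<times> UNIV" for z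
  proof -
    obtain t x where tx: "z = (t, x)" by (cases z)
    have "continuous (at z within S) u12" "continuous (at z within S) u21"
      using c12 c21 inS[OF z] unfolding continuous_on_eq_continuous_within by blast+
    then have c: "continuous (at z) u12" "continuous (at z) u21" unfolding interior[OF z] .
    show ?thesis unfolding tx
    proof (rule mixed_partials_eq[of "{t0<..} \<times> UNIV" t x u u1 u12 u2 u21])
      show "open ({t0<..} \<times> (UNIV :: real set))" by (auto intro: open_Times)
      show "(t, x) \<in> {t0<..} \<times> UNIV" using z tx by simp
      fix s y :: real
      assume sy: "(s, y) \<in> {t0<..} \<times> UNIV"
      show "((\<lambda>v. u (v, y)) has_real_derivative u1 (s, y)) (at s)" by (rule partial_at(1)[OF at(1)[OF sy]])
      show "((\<lambda>v. u1 (s, v)) has_real_derivative u12 (s, y)) (at y)" by (rule partial_at(2)[OF at(2)[OF sy]])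
      show "((\<lambda>v. u (s, v)) has_real_derivative u2 (s, y)) (at y)" by (rule partial_at(2)[OF at(1)[OF sy]])
      show "((\<lambda>v. u2 (v, y)) has_real_derivative u21 (s, y)) (at s)" by (rule partial_at(1)[OF at(3)[OF sy]])
    qed (use c tx in auto)
  qed
  show thesis
  proof (rule that)
    show "periodic_C2_strip t0 (\<lambda>(t, x). U t x) u1 u2 u11 u12 u22"
    proof
      show "continuous_on ({t0..} \<times> UNIV) (\<lambda>(t, x). U t x)" "continuous_on ({t0..} \<times> UNIV) u1"
        "continuous_on ({t0..} \<times> UNIV) u2"
        using has_derivative_continuous_on[OF du] has_derivative_continuous_on[OF du1]
          has_derivative_continuous_on[OF du2] by (simp_all add: S_def u_def)
      show "((\<lambda>(t, x). U t x) has_derivative (\<lambda>(h, k). u1 z * h + u2 z * k)) (at z)"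
        "(u1 has_derivative (\<lambda>(h, k). u11 z * h + u12 z * k)) (at z)"
        "(u2 has_derivative (\<lambda>(h, k). u12 z * h + u22 z * k)) (at z)"
        if "z \<in> {t0<..} \<times> UNIV" for z
        using at[OF that] symmetric[OF that] by (simp_all add: u_def)
      show "(\<lambda>(t, x). U t x) (t, x + 2 * pi) = (\<lambda>(t, x). U t x) (t, x)" if "t0 \<le> t" for t x
        using per[OF that] by simp
      show "u1 (t, x + 2 * pi) = u1 (t, x)" "u2 (t, x + 2 * pi) = u2 (t, x)" if "t0 \<le> t" for t x
        using strip_partials_periodic[OF du[unfolded S_def u_def] per that] by simp_all
    qed
  qed (use strip_partials_dtau_dth[OF du[unfolded S_def u_def] du1[unfolded S_def] du2[unfolded S_def]] in auto)
qed

theorem lemma2: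
  fixes P Q :: "real \<Rightarrow> real \<Rightarrow> real" and t0 \<gamma> \<alpha> :: real
  assumes smoothP: "smooth_on2 ({t0..} \<times> UNIV) (\<lambda>(t, x). P t x)"
    and smoothQ: "smooth_on2 ({t0..} \<times> UNIV) (\<lambda>(t, x). Q t x)"
    and perP: "\<And>t x. t \<ge> t0 \<Longrightarrow> P t (x + 2 * pi) = P t x"
    and perQ: "\<And>t x. t \<ge> t0 \<Longrightarrow> Q t (x + 2 * pi) = Q t x"
    and eqP: "\<And>t x. t \<ge> t0 \<Longrightarrow>
        dtau t0 (dtau t0 P) t x - exp (-2 * t) * dth (dth P) t x
        - exp (2 * P t x) * ((dtau t0 Q t x)\<^sup>2 - exp (-2 * t) * (dth Q t x)\<^sup>2) = 0"
    and eqQ: "\<And>t x. t \<ge> t0 \<Longrightarrow>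
        dtau t0 (dtau t0 Q) t x - exp (-2 * t) * dth (dth Q) t x
        + 2 * (dtau t0 P t x * dtau t0 Q t x - exp (-2 * t) * dth P t x * dth Q t x) = 0"
    and t0: "t0 \<ge> 2"
    and gamma: "\<gamma> > 0"
    and init1: "\<And>x. 1 \<le> P t0 x \<and> P t0 x \<le> t0 - 1"
    and init2: "\<And>x. \<gamma> \<le> P t0 x / t0 \<and> P t0 x / t0 \<le> 1 - \<gamma>"
    and alpha: "0 < \<alpha>" "\<alpha> < \<gamma>"
    and Fbound: "Ffun t0 P Q t0 \<le> (\<gamma> - \<alpha>)\<^sup>2"
  shows "\<exists>C. \<forall>t\<ge>t0.
           (SUP x\<in>UNIV. \<bar>exp (2 * P t x) * ((dtau t0 Q t x)\<^sup>2 + exp (-2 * t) * (dth Q t x)\<^sup>2)\<bar>)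
             \<le> C * exp (-\<alpha> * t)"
proof -
  obtain p1 p2 p11 p12 p22 where P: "periodic_C2_strip t0 (\<lambda>(t, x). P t x) p1 p2 p11 p12 p22"
    and dP: "\<And>t x. t0 \<le> t \<Longrightarrow> dtau t0 P t x = p1 (t, x)" "\<And>t x. t0 \<le> t \<Longrightarrow> dth P t x = p2 (t, x)"
      "\<And>t x. t0 \<le> t \<Longrightarrow> dtau t0 (dtau t0 P) t x = p11 (t, x)"
      "\<And>t x. t0 \<le> t \<Longrightarrow> dth (dth P) t x = p22 (t, x)"
    using smooth_on2_periodic_C2_strip[OF smoothP perP] by blast
  obtain q1 q2 q11 q12 q22 where Q: "periodic_C2_strip t0 (\<lambda>(t, x). Q t x) q1 q2 q11 q12 q22"
    and dQ: "\<And>t x. t0 \<le> t \<Longrightarrow> dtau t0 Q t x = q1 (t, x)" "\<And>t x. t0 \<le> t \<Longrightarrow> dth Q t x = q2 (t, x)"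
      "\<And>t x. t0 \<le> t \<Longrightarrow> dtau t0 (dtau t0 Q) t x = q11 (t, x)"
      "\<And>t x. t0 \<le> t \<Longrightarrow> dth (dth Q) t x = q22 (t, x)"
    using smooth_on2_periodic_C2_strip[OF smoothQ perQ] by blast
  interpret gowdy t0 "\<lambda>(t, x). P t x" p1 p2 p11 p12 p22 "\<lambda>(t, x). Q t x" q1 q2 q11 q12 q22
  proof (intro gowdy.intro P Q gowdy_axioms.intro t0)
    fix z :: "real \<times> real"
    assume "z \<in> {t0<..} \<times> UNIV"
    then have t: "t0 \<le> fst z" by auto
    show "p11 z - exp (-2 * fst z) * p22 z - exp (2 * (\<lambda>(t, x). P t x) z) * ((q1 z)\<^sup>2 - exp (-2 * fst z) * (q2 z)\<^sup>2) = 0"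
      using eqP[OF t, of "snd z"] unfolding dP[OF t] dQ[OF t] prod.collapse case_prod_unfold .
    show "q11 z - exp (-2 * fst z) * q22 z + 2 * (p1 z * q1 z - exp (-2 * fst z) * p2 z * q2 z) = 0"
      using eqQ[OF t, of "snd z"] unfolding dP[OF t] dQ[OF t] prod.collapse .
  qed
  interpret gowdy_small_data t0 "\<lambda>(t, x). P t x" p1 p2 p11 p12 p22 "\<lambda>(t, x). Q t x" q1 q2 q11 q12 q22 \<gamma> \<alpha>
  proof (unfold_locales)
    show "(initial_energy 1 + initial_energy (-1)) / 2 \<le> (\<gamma> - \<alpha>)\<^sup>2"
      using Fbound by (simp add: Ffun_def initial_energy_explicit dP dQ)
  qed (use alpha init1 init2 in auto)
  obtain C where "\<And>t. t0 \<le> t \<Longrightarrow>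
      (SUP x. \<bar>exp (2 * P t x) * ((q1 (t, x))\<^sup>2 + exp (-2 * t) * (q2 (t, x))\<^sup>2)\<bar>) \<le> C * exp (- \<alpha> * t)"
    using weighted_Q_gradient_decay by auto
  then show ?thesis by (auto simp: dQ)
qed

end
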